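(* Let $\lambda>0$, $\ell>0$, let $\gamma$ be one of $\gamma_{\rm sarc}^{\lambda,\ell,1}$, $\gamma_{\rm larc}^{\lambda,\ell,1}$ (these two when $\lambda\ell^2\le\hat\lambda$), or $\gamma_{\rm loop}^{\lambda,\ell,1}$, and let $L:=L[\gamma]$. Writing $\gamma=(X,Y)$, one has $X(s)+X(L-s)=\ell$ and $Y(s)=Y(L-s)$ for all $s\in[0,L]$. In addition, if $\gamma=\gamma_{\rm loop}^{\lambda,\ell,1}$, then $\gamma$ has a self-intersection: there is $s\in(0,L/2)$ with $\gamma(s)=\gamma(L-s)$.
   Context: Elliptic functions: for $q\in[0,1)$, $x\in\mathbb{R}$, $\mathrm{F}(x,q)=\int_0^x(1-q^2\sin^2\theta)^{-1/2}\,d\theta$, $\mathrm{E}(x,q)=\int_0^x(1-q^2\sin^2\theta)^{1/2}\,d\theta$, $\mathrm{K}(q)=\mathrm{F}(\pi/2,q)$, $\mathrm{E}(q)=\mathrm{E}(\pi/2,q)$; $\mathrm{am}(\cdot,q)$ is the inverse of $x\mapsto\mathrm{F}(x,q)$, $\mathrm{cn}(x,q)=\cos\mathrm{am}(x,q)$. The function $q\mapsto2\mathrm{E}(q)-\mathrm{K}(q)$ is strictly decreasing on $[0,1)$ with unique zero $q_*\in(0,1)$. On $[1/\sqrt2,1)$ let $f(q)=(4q^4-5q^2+1)\mathrm{K}(q)+(-8q^4+8q^2-1)\mathrm{E}(q)$ and $g(q)=8(2\mathrm{E}(q)-\mathrm{K}(q))^2(2q^2-1)$. $f$ has a unique zero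 $\hat q\in[1/\sqrt2,1)$; $\hat\lambda:=g(\hat q)\approx0.70107$. $g(1/\sqrt2)=0$, $g$ is strictly increasing on $[1/\sqrt2,\hat q]$, strictly decreasing on $[\hat q,q_*]$ with $g(q_* )=0$, strictly increasing on $[q_*,1)$ with $g\to\infty$ at $1$. For $c\in(0,\hat\lambda]$ let $q_1(c)\in(1/\sqrt2,\hat q]$, $q_2(c)\in[\hat q,q_* )$ solve $g(q)=c$; for $c>0$ let $q_3(c)\in(q_*,1)$ solve $g(q)=c$. Curves (arclength parametrized on $[0,2\mathrm{K}(q)/\alpha]$, so $L=2\mathrm{K}(q)/\alpha$): $\gamma_{\rm sarc}^{\lambda,\ell,1}(s)=\frac1\alpha\big(2\mathrm{E}(\mathrm{am}(\alpha s-\mathrm{K}(q),q),q)+2\mathrm{E}(q)-\alpha s,\ 2q\,\mathrm{cn}(\alpha s-\mathrm{K}(q),q)\big)$ with $q=q_1(\lambda\ell^2)$, $\alpha=\frac{2}{\ell}(2\mathrm{E}(q)-\mathrm{K}(q))$; $\gamma_{\rm larc}^{\lambda,\ell,1}$ is the same formula with $q=q_2(\lambda\ell^2)$; $\gamma_{\rm loop}^{\lambda,\ell,1}(s)=\frac1\alpha\big(-2\mathrm{E}(\mathrm{am}(\alpha s-\mathrm{K}(q),q),q)-2\mathrm{E}(q)+\alpha s,\ 2q\,\mathrm{cn}(\alpha s-\mathrm{K}(q),q)\big)$ with $q=q_3(\lambda\ell^2)$, $\alpha=\frac{2}{\ell}(\mathrm{K}(q)-2\mathrm{E}(q))$. 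*)

theory Defs
  imports "HOL-Analysis.Analysis"
begin

text \<open>Signed integral from 0 to x (so that F and E are defined for all real x).\<close>
definition sint0 :: "(real \<Rightarrow> real) \<Rightarrow> real \<Rightarrow> real" where
  "sint0 h x = (if 0 \<le> x then integral {0..x} h else - integral {x..0} h)"

definition ellF :: "real \<Rightarrow> real \<Rightarrow> real" where
  "ellF x q = sint0 (\<lambda>\<theta>. 1 / sqrt (1 - q\<^sup>2 * (sin \<theta>)\<^sup>2)) x"

definition ellE :: "real \<Rightarrow> real \<Rightarrow> real" where
  "ellE x q = sint0 (\<lambda>\<theta>. sqrt (1 - q\<^sup>2 * (sin \<theta>)\<^sup>2)) x"

definition ellK :: "real \<Rightarrow> real" where
  "ellK q = ellF (pi / 2) q"

definition ellEc :: "real \<Rightarrow> real" where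
  "ellEc q = ellE (pi / 2) q"

definition am :: "real \<Rightarrow> real \<Rightarrow> real" where
  "am u q = (THE x. ellF x q = u)"

definition cn :: "real \<Rightarrow> real \<Rightarrow> real" where
  "cn u q = cos (am u q)"

definition q_star :: real where
  "q_star = (THE q. 0 \<le> q \<and> q < 1 \<and> 2 * ellEc q - ellK q = 0)"

definition f_aux :: "real \<Rightarrow> real" where
  "f_aux q = (4*q^4 - 5*q\<^sup>2 + 1) * ellK q + (-8*q^4 + 8*q\<^sup>2 - 1) * ellEc q"

definition g_aux :: "real \<Rightarrow> real" where
  "g_aux q = 8 * (2 * ellEc q - ellK q)\<^sup>2 * (2*q\<^sup>2 - 1)"

definition q_hat :: real where
  "q_hat = (THE q. 1 / sqrt 2 \<le> q \<and> q < 1 \<and> f_aux q = 0)"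

definition lambda_hat :: real where
  "lambda_hat = g_aux q_hat"

definition q1 :: "real \<Rightarrow> real" where
  "q1 c = (THE q. 1 / sqrt 2 < q \<and> q \<le> q_hat \<and> g_aux q = c)"

definition q2 :: "real \<Rightarrow> real" where
  "q2 c = (THE q. q_hat \<le> q \<and> q < q_star \<and> g_aux q = c)"

definition q3 :: "real \<Rightarrow> real" where
  "q3 c = (THE q. q_star < q \<and> q < 1 \<and> g_aux q = c)"

definition alpha_arc :: "real \<Rightarrow> real \<Rightarrow> real" where
  "alpha_arc q l = 2 / l * (2 * ellEc q - ellK q)"

definition gamma_arc :: "real \<Rightarrow> real \<Rightarrow> real \<Rightarrow> real \<times> real" where
  "gamma_arc q l s = (let a = alpha_arc q l in
     ((2 * ellE (am (a * s - ellK q) q) q + 2 * ellEc q - a * s) / a,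
      (2 * q * cn (a * s - ellK q) q) / a))"

definition alpha_loop :: "real \<Rightarrow> real \<Rightarrow> real" where
  "alpha_loop q l = 2 / l * (ellK q - 2 * ellEc q)"

definition gamma_loop0 :: "real \<Rightarrow> real \<Rightarrow> real \<Rightarrow> real \<times> real" where
  "gamma_loop0 q l s = (let a = alpha_loop q l in
     ((- 2 * ellE (am (a * s - ellK q) q) q - 2 * ellEc q + a * s) / a,
      (2 * q * cn (a * s - ellK q) q) / a))"

definition gamma_sarc :: "real \<Rightarrow> real \<Rightarrow> real \<Rightarrow> real \<times> real" where
  "gamma_sarc lam l = gamma_arc (q1 (lam * l\<^sup>2)) l"

definition gamma_larc :: "real \<Rightarrow> real \<Rightarrow> real \<Rightarrow> real \<times> real" where
  "gamma_larc lam l = gamma_arc (q2 (lam * l\<^sup>2)) l"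

definition gamma_loop :: "real \<Rightarrow> real \<Rightarrow> real \<Rightarrow> real \<times> real" where
  "gamma_loop lam l = gamma_loop0 (q3 (lam * l\<^sup>2)) l"

definition L_sarc :: "real \<Rightarrow> real \<Rightarrow> real" where
  "L_sarc lam l = (let q = q1 (lam * l\<^sup>2) in 2 * ellK q / alpha_arc q l)"

definition L_larc :: "real \<Rightarrow> real \<Rightarrow> real" where
  "L_larc lam l = (let q = q2 (lam * l\<^sup>2) in 2 * ellK q / alpha_arc q l)"

definition L_loop :: "real \<Rightarrow> real \<Rightarrow> real" where
  "L_loop lam l = (let q = q3 (lam * l\<^sup>2) in 2 * ellK q / alpha_loop q l)"

definition sym_curve :: "(real \<Rightarrow> real \<times> real) \<Rightarrow> real \<Rightarrow> real \<Rightarrow> bool" where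
  "sym_curve \<gamma> L l \<longleftrightarrow> (\<forall>s\<in>{0..L}. fst (\<gamma> s) + fst (\<gamma> (L - s)) = l \<and> snd (\<gamma> s) = snd (\<gamma> (L - s)))"

end

(*
  F(., q) and E(., q) are odd, hence so is am(., q), while cn(., q) is even. Apart from a
  term linear in s, the curves depend on s only through E(am u) and cn u with
  u = alpha s - K(q), and the reflection s -> L - s, L = 2K/alpha, sends u to -u; this gives
  X(s) + X(L - s) = l and Y(s) = Y(L - s). The loop is the arc formula with alpha and s
  replaced by -alpha and -s. A self-intersection gamma(s) = gamma(L - s) amounts to
  X(s) = l/2, i.e. to F(phi) = 2 E(phi) for phi = am(alpha s - K); on (-pi/2, 0) the
  function F - 2E is positive near 0 (its slope there is -1) and equals 2E - K < 0 at
  -pi/2 when q > q_star.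

  The real work is to show that q_star, q_hat, q1, q2, q3 are well defined, so that their
  definite descriptions can be evaluated. Differentiating under the integral sign gives
  Legendre's formulas E' = (E - K)/q and K' = E/(q (1 - q^2)) - K/q, hence 2E - K is
  strictly decreasing and g' = 16 (2E - K) f / (q (1 - q^2)). Crude two-piece Riemann
  bounds locate the sign changes of 2E - K and of f, and the logarithmic growth of K
  near q = 1 makes g unbounded there.
*)
theory Submission
  imports Defs
begin

section \<open>Incomplete integrals and the Jacobi amplitude\<close>

lemma sint0_eq_integral_diff:
  assumes h: "continuous_on UNIV h" and a: "a \<le> min y 0"
  shows "sint0 h y = integral {a..y} h - integral {a..0} h"
proof (cases "0 \<le> y")
  case True
  have "integral {a..0} h + integral {0..y} h = integral {a..y} h"
    by (rule Henstock_Kurzweil_Integration.integral_combine[of a 0 y h])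
       (use a True in \<open>auto intro!: integrable_continuous_real continuous_on_subset[OF h]\<close>)
  then show ?thesis using True by (simp add: sint0_def)
next
  case False
  have "integral {a..y} h + integral {y..0} h = integral {a..0} h"
    by (rule Henstock_Kurzweil_Integration.integral_combine[of a y 0 h])
       (use a False in \<open>auto intro!: integrable_continuous_real continuous_on_subset[OF h]\<close>)
  then show ?thesis using False by (simp add: sint0_def)
qed

lemma sint0_has_real_derivative:
  assumes h: "continuous_on UNIV h"
  shows "(sint0 h has_real_derivative h x) (at x)"
proof -
  define a where "a = - \<bar>x\<bar> - 1"
  define b where "b = \<bar>x\<bar> + 1"
  have "((\<lambda>y. integral {a..y} h) has_real_derivative h x) (at x within {a..b})"
    by (rule integral_has_real_derivative) (auto intro: continuous_on_subset[OF h] simp: a_def b_def)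
  moreover have "at x within {a..b} = at x"
    by (rule at_within_Icc_at) (auto simp: a_def b_def)
  ultimately have "((\<lambda>y. integral {a..y} h - integral {a..0} h) has_real_derivative h x) (at x)"
    by (auto intro!: derivative_eq_intros)
  then show ?thesis
    by (rule has_field_derivative_transform_within_open[where S="{a<..<b}"])
       (use sint0_eq_integral_diff[OF h, of a] in \<open>auto simp: a_def b_def\<close>)
qed

lemma sint0_minus:
  assumes h: "continuous_on UNIV h" and even: "\<And>t. h (- t) = h t"
  shows "sint0 h (- x) = - sint0 h x"
proof -
  have "((\<lambda>x. sint0 h x + sint0 h (- x)) has_real_derivative 0) (at y)" for y
    using DERIV_add[OF sint0_has_real_derivative[OF h]
        DERIV_chain2[OF sint0_has_real_derivative[OF h] DERIV_minus[OF DERIV_ident]]]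
    by (simp add: even)
  from DERIV_isconst_all[OF allI[OF this], of x 0] show ?thesis
    by (simp add: sint0_def)
qed

definition ellF_integrand :: "real \<Rightarrow> real \<Rightarrow> real" where
  "ellF_integrand q t = 1 / sqrt (1 - q\<^sup>2 * (sin t)\<^sup>2)"

definition ellE_integrand :: "real \<Rightarrow> real \<Rightarrow> real" where
  "ellE_integrand q t = sqrt (1 - q\<^sup>2 * (sin t)\<^sup>2)"

lemma ellF_sint0: "ellF x q = sint0 (ellF_integrand q) x"
  by (simp add: ellF_def ellF_integrand_def[abs_def])

lemma ellE_sint0: "ellE x q = sint0 (ellE_integrand q) x"
  by (simp add: ellE_def ellE_integrand_def[abs_def])

lemma ellF_0 [simp]: "ellF 0 q = 0"
  by (simp add: ellF_def sint0_def)

lemma ellE_0 [simp]: "ellE 0 q = 0"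
  by (simp add: ellE_def sint0_def)

lemma sin_squared_le_1: "(sin (t::real))\<^sup>2 \<le> 1"
  using sin_cos_squared_add[of t] zero_le_power2[of "cos t"] by linarith

lemma radicand_antimono:
  fixes q t S :: real
  assumes "(sin t)\<^sup>2 \<le> S"
  shows "1 - q\<^sup>2 * S \<le> 1 - q\<^sup>2 * (sin t)\<^sup>2"
  using mult_left_mono[OF assms, of "q\<^sup>2"] by simp

lemma radicand_ge_1_minus_q_squared: "1 - q\<^sup>2 \<le> 1 - q\<^sup>2 * (sin (t::real))\<^sup>2"
  using radicand_antimono[OF sin_squared_le_1[of t], of q] by simp

lemma square_less_1_iff: "x\<^sup>2 < 1 \<longleftrightarrow> x \<in> {-1<..<1::real}"
  by (auto simp: abs_square_less_1 abs_less_iff)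

lemma square_less_1: "0 < q \<Longrightarrow> q < (1::real) \<Longrightarrow> q\<^sup>2 < 1"
  by (simp add: abs_square_less_1)

lemma radicand_pos: "q\<^sup>2 < 1 \<Longrightarrow> 0 < 1 - q\<^sup>2 * (sin (t::real))\<^sup>2"
  using radicand_ge_1_minus_q_squared[of q t] by linarith

lemma ellF_integrand_pos: "q\<^sup>2 < 1 \<Longrightarrow> 0 < ellF_integrand q t"
  using radicand_pos[of q t] by (simp add: ellF_integrand_def)

lemma ellF_integrand_ge_1: "q\<^sup>2 < 1 \<Longrightarrow> 1 \<le> ellF_integrand q t"
  using radicand_pos[of q t] by (simp add: ellF_integrand_def)

lemma ellE_integrand_le_1: "q\<^sup>2 < 1 \<Longrightarrow> ellE_integrand q t \<le> 1"
  using radicand_pos[of q t] by (simp add: ellE_integrand_def)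

lemma ellE_integrand_le_ellF_integrand: "q\<^sup>2 < 1 \<Longrightarrow> ellE_integrand q t \<le> ellF_integrand q t"
  using ellE_integrand_le_1 ellF_integrand_ge_1 by (meson order_trans)

lemma ellF_integrand_le:
  assumes "q\<^sup>2 < 1" "0 < c" "1 / c\<^sup>2 \<le> 1 - q\<^sup>2 * (sin t)\<^sup>2"
  shows "ellF_integrand q t \<le> c"
proof -
  have "1 / c \<le> sqrt (1 - q\<^sup>2 * (sin t)\<^sup>2)"
    using real_sqrt_le_mono[OF assms(3)] assms(2) by (simp add: real_sqrt_divide)
  moreover have "0 < sqrt (1 - q\<^sup>2 * (sin t)\<^sup>2)" using radicand_pos[OF assms(1)] by simp
  ultimately show ?thesis using assms(2) by (simp add: ellF_integrand_def divide_le_eq mult.commute)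
qed

lemma ellE_integrand_ge: "0 \<le> c \<Longrightarrow> c\<^sup>2 \<le> 1 - q\<^sup>2 * (sin t)\<^sup>2 \<Longrightarrow> c \<le> ellE_integrand q t"
  by (simp add: ellE_integrand_def real_le_rsqrt)

lemma continuous_on_ellF_integrand:
  assumes "q\<^sup>2 < 1"
  shows "continuous_on UNIV (ellF_integrand q)"
proof -
  have "sqrt (1 - q\<^sup>2 * (sin t)\<^sup>2) \<noteq> 0" for t
    using radicand_pos[OF assms, of t] by simp
  then show ?thesis unfolding ellF_integrand_def[abs_def] by (auto intro!: continuous_intros)
qed

lemma continuous_on_ellE_integrand: "continuous_on UNIV (ellE_integrand q)"
  unfolding ellE_integrand_def[abs_def] by (auto intro!: continuous_intros)

lemma ellF_has_real_derivative:
  "q\<^sup>2 < 1 \<Longrightarrow> ((\<lambda>x. ellF x q) has_real_derivative ellF_integrand q x) (at x)"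
  unfolding ellF_sint0 by (rule sint0_has_real_derivative[OF continuous_on_ellF_integrand])

lemma ellE_has_real_derivative: "((\<lambda>x. ellE x q) has_real_derivative ellE_integrand q x) (at x)"
  unfolding ellE_sint0 by (rule sint0_has_real_derivative[OF continuous_on_ellE_integrand])

lemma ellF_minus: "q\<^sup>2 < 1 \<Longrightarrow> ellF (- x) q = - ellF x q"
  unfolding ellF_sint0
  by (rule sint0_minus[OF continuous_on_ellF_integrand]) (simp_all add: ellF_integrand_def)

lemma ellE_minus: "ellE (- x) q = - ellE x q"
  unfolding ellE_sint0
  by (rule sint0_minus[OF continuous_on_ellE_integrand]) (simp add: ellE_integrand_def)

lemma ellF_less: "q\<^sup>2 < 1 \<Longrightarrow> x < y \<Longrightarrow> ellF x q < ellF y q"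
  using DERIV_pos_imp_increasing[of x y "\<lambda>x. ellF x q"]
    ellF_has_real_derivative ellF_integrand_pos by blast

lemma ellF_eq_iff: "q\<^sup>2 < 1 \<Longrightarrow> ellF x q = ellF y q \<longleftrightarrow> x = y"
  using ellF_less[of q x y] ellF_less[of q y x] by (cases x y rule: linorder_cases) auto

lemma ellF_ge_self:
  assumes q: "q\<^sup>2 < 1" and "0 \<le> x"
  shows "x \<le> ellF x q"
proof -
  have "ellF 0 q - 0 \<le> ellF x q - x"
  proof (rule DERIV_nonneg_imp_nondecreasing[OF \<open>0 \<le> x\<close>, of "\<lambda>x. ellF x q - x"])
    fix t
    show "\<exists>y. ((\<lambda>x. ellF x q - x) has_real_derivative y) (at t) \<and> 0 \<le> y"
      using DERIV_diff[OF ellF_has_real_derivative[OF q] DERIV_ident] ellF_integrand_ge_1[OF q, of t]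
      by force
  qed
  then show ?thesis by simp
qed

lemma ellF_surj:
  assumes q: "q\<^sup>2 < 1"
  shows "\<exists>x. ellF x q = u"
proof -
  have nonneg: "\<exists>x. ellF x q = u" if "0 \<le> u" for u
    using IVT[of "\<lambda>x. ellF x q" 0 u u] that ellF_ge_self[OF q that]
      DERIV_isCont[OF ellF_has_real_derivative[OF q]]
    by auto
  show ?thesis
  proof (cases "0 \<le> u")
    case False
    then obtain x where "ellF x q = - u" using nonneg[of "- u"] by auto
    then have "ellF (- x) q = u" by (simp add: ellF_minus[OF q])
    then show ?thesis ..
  qed (rule nonneg)
qed

lemma am_ellF: "q\<^sup>2 < 1 \<Longrightarrow> am (ellF x q) q = x"
  unfolding am_def by (rule the_equality) (auto simp: ellF_eq_iff)

lemma am_minus: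
  assumes q: "q\<^sup>2 < 1"
  shows "am (- u) q = - am u q"
proof -
  obtain x where "ellF x q = u" using ellF_surj[OF q] by blast
  then show ?thesis using am_ellF[OF q, of x] am_ellF[OF q, of "- x"] by (simp add: ellF_minus[OF q])
qed

lemma cn_minus: "q\<^sup>2 < 1 \<Longrightarrow> cn (- u) q = cn u q"
  by (simp add: cn_def am_minus)

section \<open>Symmetry and self-intersection of the curves\<close>

lemma alpha_loop_eq: "alpha_loop q l = - alpha_arc q l"
  by (simp add: alpha_loop_def alpha_arc_def algebra_simps)

lemma gamma_loop0_eq_gamma_arc:
  "gamma_loop0 q l s = (fst (gamma_arc q l (- s)), - snd (gamma_arc q l (- s)))"
  by (simp add: gamma_loop0_def gamma_arc_def alpha_loop_eq Let_def divide_simps)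

lemma gamma_arc_reflection:
  assumes q: "q\<^sup>2 < 1" and l: "l \<noteq> 0" and h: "2 * ellEc q - ellK q \<noteq> 0"
  defines "L \<equiv> 2 * ellK q / alpha_arc q l"
  shows "fst (gamma_arc q l s) + fst (gamma_arc q l (L - s)) = l"
    and "snd (gamma_arc q l (L - s)) = snd (gamma_arc q l s)"
proof -
  define a where "a = alpha_arc q l"
  have a: "a \<noteq> 0" using h l by (simp add: a_def alpha_arc_def)
  have l_eq: "l = 2 * (2 * ellEc q - ellK q) / a" using l h by (simp add: a_def alpha_arc_def)
  have reflect: "a * (L - s) - ellK q = - (a * s - ellK q)"
    using a by (simp add: L_def a_def[symmetric] field_simps)
  show "fst (gamma_arc q l s) + fst (gamma_arc q l (L - s)) = l"
    unfolding gamma_arc_def Let_def a_def[symmetric] fst_conv reflect am_minus[OF q] ellE_minus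
    using a by (subst l_eq) (simp add: L_def a_def[symmetric] field_simps)
  show "snd (gamma_arc q l (L - s)) = snd (gamma_arc q l s)"
    unfolding gamma_arc_def Let_def a_def[symmetric] snd_conv reflect cn_minus[OF q] ..
qed

lemma gamma_arc_self_intersection:
  assumes q: "q\<^sup>2 < 1" and l: "l \<noteq> 0" and h: "2 * ellEc q - ellK q \<noteq> 0"
    and root: "ellF \<phi> q = 2 * ellE \<phi> q"
  defines "t \<equiv> (ellF \<phi> q + ellK q) / alpha_arc q l"
  shows "gamma_arc q l t = gamma_arc q l (2 * ellK q / alpha_arc q l - t)"
proof -
  define a where "a = alpha_arc q l"
  have a: "a \<noteq> 0" using h l by (simp add: a_def alpha_arc_def)
  have l_eq: "l = 2 * (2 * ellEc q - ellK q) / a" using l h by (simp add: a_def alpha_arc_def)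
  have at: "a * t - ellK q = ellF \<phi> q" using a by (simp add: t_def a_def[symmetric])
  have "fst (gamma_arc q l t) = l / 2"
    unfolding gamma_arc_def Let_def a_def[symmetric] fst_conv at am_ellF[OF q]
    using a root by (subst l_eq) (simp add: t_def a_def[symmetric] field_simps)
  then show ?thesis
    using gamma_arc_reflection[OF q l h, of t] by (simp add: prod_eq_iff)
qed

lemma sym_curve_gamma_arc:
  assumes "q\<^sup>2 < 1" "l \<noteq> 0" "2 * ellEc q - ellK q \<noteq> 0"
  shows "sym_curve (gamma_arc q l) (2 * ellK q / alpha_arc q l) l"
  using gamma_arc_reflection[OF assms] by (simp add: sym_curve_def)

lemma sym_curve_gamma_loop0:
  assumes "q\<^sup>2 < 1" "l \<noteq> 0" "2 * ellEc q - ellK q \<noteq> 0"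
  shows "sym_curve (gamma_loop0 q l) (2 * ellK q / alpha_loop q l) l"
  unfolding sym_curve_def
proof (intro ballI conjI)
  fix s
  have "2 * ellK q / alpha_loop q l - s = - (2 * ellK q / alpha_arc q l - (- s))"
    by (simp add: alpha_loop_eq)
  then show "fst (gamma_loop0 q l s) + fst (gamma_loop0 q l (2 * ellK q / alpha_loop q l - s)) = l"
    and "snd (gamma_loop0 q l s) = snd (gamma_loop0 q l (2 * ellK q / alpha_loop q l - s))"
    using gamma_arc_reflection[OF assms, of "- s"] by (simp_all add: gamma_loop0_eq_gamma_arc ac_simps)
qed

lemma ellF_eq_2_ellE_root:
  assumes q: "q\<^sup>2 < 1" and hK: "2 * ellEc q < ellK q"
  obtains \<phi> where "- (pi / 2) < \<phi>" "\<phi> < 0" "ellF \<phi> q = 2 * ellE \<phi> q"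
proof -
  define H where "H x = ellF x q - 2 * ellE x q" for x
  have dH: "(H has_real_derivative ellF_integrand q x - 2 * ellE_integrand q x) (at x)" for x
    unfolding H_def[abs_def]
    by (intro DERIV_diff DERIV_cmult ellF_has_real_derivative[OF q] ellE_has_real_derivative)
  have "ellF_integrand q 0 - 2 * ellE_integrand q 0 < 0"
    by (simp add: ellF_integrand_def ellE_integrand_def)
  from DERIV_neg_dec_left[OF dH this] obtain d
    where d: "d > 0" "\<And>h. h > 0 \<Longrightarrow> h < d \<Longrightarrow> H 0 < H (0 - h)" by blast
  define h where "h = min (d / 2) 1"
  have h: "0 < h" "h < d" "h < pi / 2" using d pi_gt3 by (auto simp: h_def)
  have "0 < H (- h)" using d(2)[OF h(1,2)] by (simp add: H_def)
  moreover have H_pi: "H (- (pi / 2)) < 0"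
    using hK by (simp add: H_def ellF_minus[OF q] ellE_minus ellK_def ellEc_def)
  ultimately obtain \<phi> where \<phi>: "- (pi / 2) \<le> \<phi>" "\<phi> \<le> - h" "H \<phi> = 0"
    using IVT[of H "- (pi / 2)" 0 "- h"] h DERIV_isCont[OF dH] by force
  moreover have "\<phi> \<noteq> - (pi / 2)" using \<phi>(3) H_pi by auto
  ultimately show ?thesis using h by (intro that[of \<phi>]) (auto simp: H_def)
qed

lemma gamma_loop0_self_intersection:
  assumes q: "q\<^sup>2 < 1" and l: "l > 0" and hK: "2 * ellEc q < ellK q"
  defines "L \<equiv> 2 * ellK q / alpha_loop q l"
  shows "\<exists>s. 0 < s \<and> s < L / 2 \<and> gamma_loop0 q l s = gamma_loop0 q l (L - s)"
proof -
  obtain \<phi> where \<phi>: "- (pi / 2) < \<phi>" "\<phi> < 0" and root: "ellF \<phi> q = 2 * ellE \<phi> q"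
    using ellF_eq_2_ellE_root[OF q hK] .
  have "- ellK q < ellF \<phi> q" using ellF_less[OF q \<phi>(1)] by (simp add: ellF_minus[OF q] ellK_def)
  moreover have "ellF \<phi> q < 0" using ellF_less[OF q \<phi>(2)] by simp
  moreover have a: "0 < alpha_loop q l" using hK l by (simp add: alpha_loop_def)
  define t where "t = (ellF \<phi> q + ellK q) / alpha_arc q l"
  have "gamma_arc q l t = gamma_arc q l (2 * ellK q / alpha_arc q l - t)"
    unfolding t_def using l hK by (intro gamma_arc_self_intersection[OF q _ _ root]) auto
  moreover have "L - (- t) = - (2 * ellK q / alpha_arc q l - t)"
    by (simp add: L_def alpha_loop_eq)
  ultimately have "gamma_loop0 q l (- t) = gamma_loop0 q l (L - (- t))"
    by (simp add: gamma_loop0_eq_gamma_arc)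
  moreover have "0 < - t" "- t < L / 2"
    using a \<open>- ellK q < ellF \<phi> q\<close> \<open>ellF \<phi> q < 0\<close>
    by (simp_all add: t_def L_def alpha_loop_eq divide_simps)
  ultimately show ?thesis by blast
qed

section \<open>Complete integrals as functions of the modulus\<close>

lemma integral_has_real_derivative_param:
  fixes f fx :: "real \<Rightarrow> real \<Rightarrow> real"
  assumes U: "open U" "convex U" "x \<in> U"
    and f: "\<And>y t. y \<in> U \<Longrightarrow> ((\<lambda>x. f x t) has_real_derivative fx y t) (at y)"
    and cont_f: "\<And>y. y \<in> U \<Longrightarrow> continuous_on {a..b} (f y)"
    and cont_fx: "continuous_on (U \<times> {a..b}) (\<lambda>(x, t). fx x t)"
  shows "((\<lambda>x. integral {a..b} (f x)) has_real_derivative integral {a..b} (fx x)) (at x)"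
proof -
  have "((\<lambda>x. integral (cbox a b) (f x)) has_field_derivative integral (cbox a b) (fx x)) (at x within U)"
  proof (rule leibniz_rule_field_derivative[where U=U and f=f and fx=fx])
    fix y t assume "y \<in> U"
    show "((\<lambda>x. f x t) has_field_derivative fx y t) (at y within U)"
      using f[OF \<open>y \<in> U\<close>] by (rule DERIV_subset) simp
  next
    fix y assume "y \<in> U"
    show "f y integrable_on cbox a b"
      using cont_f[OF \<open>y \<in> U\<close>] by (simp add: integrable_continuous_real)
  next
    show "continuous_on (U \<times> cbox a b) (\<lambda>(x, t). fx x t)" using cont_fx by simp
  qed (use U in simp_all)
  then show ?thesis
    unfolding at_within_open[OF U(3,1)] by (simp only: cbox_interval)
qed

lemma ellK_eq_integral: "ellK q = integral {0..pi/2} (ellF_integrand q)"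
  by (simp add: ellK_def ellF_sint0 sint0_def)

lemma ellEc_eq_integral: "ellEc q = integral {0..pi/2} (ellE_integrand q)"
  by (simp add: ellEc_def ellE_sint0 sint0_def)

lemma ellF_integrand_has_integral: "q\<^sup>2 < 1 \<Longrightarrow> (ellF_integrand q has_integral ellK q) {0..pi/2}"
  unfolding ellK_eq_integral
  by (intro integrable_integral integrable_continuous_real continuous_on_subset[OF continuous_on_ellF_integrand]) auto

lemma ellE_integrand_has_integral: "(ellE_integrand q has_integral ellEc q) {0..pi/2}"
  unfolding ellEc_eq_integral
  by (intro integrable_integral integrable_continuous_real continuous_on_subset[OF continuous_on_ellE_integrand]) auto

definition ellF_integrand_dq :: "real \<Rightarrow> real \<Rightarrow> real" where
  "ellF_integrand_dq q t = q * (sin t)\<^sup>2 / ((1 - q\<^sup>2 * (sin t)\<^sup>2) * sqrt (1 - q\<^sup>2 * (sin t)\<^sup>2))"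

definition ellE_integrand_dq :: "real \<Rightarrow> real \<Rightarrow> real" where
  "ellE_integrand_dq q t = - q * (sin t)\<^sup>2 / sqrt (1 - q\<^sup>2 * (sin t)\<^sup>2)"

lemma sqrt_radicand_has_derivative_q:
  assumes "q\<^sup>2 < 1"
  shows "((\<lambda>q. sqrt (1 - q\<^sup>2 * (sin t)\<^sup>2)) has_real_derivative
     inverse (sqrt (1 - q\<^sup>2 * (sin t)\<^sup>2)) / 2 * (- (2 * q * (sin t)\<^sup>2))) (at q)"
proof -
  have dg: "((\<lambda>q. 1 - q\<^sup>2 * (sin t)\<^sup>2) has_real_derivative - (2 * q * (sin t)\<^sup>2)) (at q)"
    by (auto intro!: derivative_eq_intros)
  show ?thesis by (rule DERIV_chain2[OF DERIV_real_sqrt[OF radicand_pos[OF assms, of t]] dg])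
qed

lemma ellF_integrand_has_derivative_q:
  assumes "q\<^sup>2 < 1"
  shows "((\<lambda>q. ellF_integrand q t) has_real_derivative ellF_integrand_dq q t) (at q)"
proof -
  have D: "0 < 1 - q\<^sup>2 * (sin t)\<^sup>2" using radicand_pos[OF assms] .
  have "((\<lambda>q. 1 / sqrt (1 - q\<^sup>2 * (sin t)\<^sup>2)) has_real_derivative
     (0 * sqrt (1 - q\<^sup>2 * (sin t)\<^sup>2) - 1 * (inverse (sqrt (1 - q\<^sup>2 * (sin t)\<^sup>2)) / 2 * (- (2 * q * (sin t)\<^sup>2))))
      / (sqrt (1 - q\<^sup>2 * (sin t)\<^sup>2) * sqrt (1 - q\<^sup>2 * (sin t)\<^sup>2))) (at q)"
    by (rule DERIV_divide[OF DERIV_const sqrt_radicand_has_derivative_q[OF assms]]) (use D in simp)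
  then show ?thesis unfolding ellF_integrand_def[abs_def] ellF_integrand_dq_def
    by (rule DERIV_cong) (use D in \<open>simp add: field_simps\<close>)
qed

lemma ellE_integrand_has_derivative_q:
  assumes "q\<^sup>2 < 1"
  shows "((\<lambda>q. ellE_integrand q t) has_real_derivative ellE_integrand_dq q t) (at q)"
  unfolding ellE_integrand_def[abs_def] ellE_integrand_dq_def
  by (rule DERIV_cong[OF sqrt_radicand_has_derivative_q[OF assms]])
     (use radicand_pos[OF assms] in \<open>simp add: field_simps\<close>)

lemma continuous_on_ellF_integrand_dq: "continuous_on ({-1<..<1} \<times> S) (\<lambda>(q, t). ellF_integrand_dq q t)"
proof -
  have "\<And>q t. q \<in> {-1<..<1::real} \<Longrightarrow> 0 < 1 - q\<^sup>2 * (sin t)\<^sup>2"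
    using radicand_pos square_less_1_iff by blast
  then show ?thesis unfolding ellF_integrand_dq_def split_beta
    by (auto intro!: continuous_intros simp: less_imp_neq[symmetric])
qed

lemma continuous_on_ellE_integrand_dq: "continuous_on ({-1<..<1} \<times> S) (\<lambda>(q, t). ellE_integrand_dq q t)"
proof -
  have "\<And>q t. q \<in> {-1<..<1::real} \<Longrightarrow> 0 < 1 - q\<^sup>2 * (sin t)\<^sup>2"
    using radicand_pos square_less_1_iff by blast
  then show ?thesis unfolding ellE_integrand_dq_def split_beta
    by (auto intro!: continuous_intros simp: less_imp_neq[symmetric])
qed

lemma ellK_has_derivative_integral:
  assumes "q \<in> {-1<..<1}"
  shows "(ellK has_real_derivative integral {0..pi/2} (ellF_integrand_dq q)) (at q)"
  unfolding ellK_eq_integral[abs_def]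
proof (rule integral_has_real_derivative_param[OF _ _ assms _ _ continuous_on_ellF_integrand_dq])
  show "\<And>y t. y \<in> {-1<..<1} \<Longrightarrow> ((\<lambda>x. ellF_integrand x t) has_real_derivative ellF_integrand_dq y t) (at y)"
    by (rule ellF_integrand_has_derivative_q) (simp add: square_less_1_iff)
  show "\<And>y. y \<in> {-1<..<1} \<Longrightarrow> continuous_on {0..pi/2} (ellF_integrand y)"
    by (rule continuous_on_subset[OF continuous_on_ellF_integrand]) (auto simp: square_less_1_iff)
qed auto

lemma ellEc_has_derivative_integral:
  assumes "q \<in> {-1<..<1}"
  shows "(ellEc has_real_derivative integral {0..pi/2} (ellE_integrand_dq q)) (at q)"
  unfolding ellEc_eq_integral[abs_def]
proof (rule integral_has_real_derivative_param[OF _ _ assms _ _ continuous_on_ellE_integrand_dq])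
  show "\<And>y t. y \<in> {-1<..<1} \<Longrightarrow> ((\<lambda>x. ellE_integrand x t) has_real_derivative ellE_integrand_dq y t) (at y)"
    by (rule ellE_integrand_has_derivative_q) (simp add: square_less_1_iff)
  show "\<And>y. y \<in> {-1<..<1} \<Longrightarrow> continuous_on {0..pi/2} (ellE_integrand y)"
    by (rule continuous_on_subset[OF continuous_on_ellE_integrand]) auto
qed auto

lemma ellE_integrand_dq_eq:
  assumes q: "0 < q" "q < 1"
  shows "ellE_integrand_dq q t = (ellE_integrand q t - ellF_integrand q t) / q"
proof -
  define r where "r = sqrt (1 - q\<^sup>2 * (sin t)\<^sup>2)"
  have D: "0 < 1 - q\<^sup>2 * (sin t)\<^sup>2" using radicand_pos[OF square_less_1[OF q]] .
  have r: "r > 0" "r * r = 1 - q\<^sup>2 * (sin t)\<^sup>2" using D by (simp_all add: r_def)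
  have "(r - 1 / r) / q = (r * r - 1) / (r * q)" using r q by (simp add: field_simps)
  also have "\<dots> = - (q\<^sup>2 * (sin t)\<^sup>2) / (r * q)" using r by simp
  also have "\<dots> = - q * (sin t)\<^sup>2 / r" using r q by (simp add: field_simps power2_eq_square)
  finally show ?thesis by (simp add: ellE_integrand_def ellF_integrand_def ellE_integrand_dq_def r_def)
qed

lemma ellEc_has_real_derivative:
  assumes q: "0 < q" "q < 1"
  shows "(ellEc has_real_derivative (ellEc q - ellK q) / q) (at q)"
proof -
  have "((\<lambda>t. (ellE_integrand q t - ellF_integrand q t) / q) has_integral (ellEc q - ellK q) / q) {0..pi/2}"
    using square_less_1[OF q]
    by (intro has_integral_divide has_integral_diff ellE_integrand_has_integral ellF_integrand_has_integral)
  moreover have "ellE_integrand_dq q = (\<lambda>t. (ellE_integrand q t - ellF_integrand q t) / q)"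
    using ellE_integrand_dq_eq[OF q] by blast
  ultimately have "(ellE_integrand_dq q has_integral (ellEc q - ellK q) / q) {0..pi/2}"
    by simp
  then have "integral {0..pi/2} (ellE_integrand_dq q) = (ellEc q - ellK q) / q"
    by (rule integral_unique)
  with ellEc_has_derivative_integral[of q] q show ?thesis by simp
qed

text \<open>With \<open>\<Delta>(t) = \<surd>(1 - q\<^sup>2 sin\<^sup>2 t)\<close>, the \<open>t\<close>-derivative of
  \<open>sin t cos t / \<Delta>(t)\<close> integrates to zero over \<open>[0, \<pi>/2]\<close>; adding a suitable multiple
  of it turns \<open>\<partial>\<^sub>q\<close> of the \<open>F\<close>-integrand into a combination of the two integrands,
  which yields Legendre's formula for \<open>K'\<close>.\<close>
definition sincos_radicand :: "real \<Rightarrow> real \<Rightarrow> real" where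
  "sincos_radicand q t = sin t * cos t / sqrt (1 - q\<^sup>2 * (sin t)\<^sup>2)"

definition sincos_radicand_dt :: "real \<Rightarrow> real \<Rightarrow> real" where
  "sincos_radicand_dt q t = (1 - 2 * (sin t)\<^sup>2 + q\<^sup>2 * (sin t)^4) /
     ((1 - q\<^sup>2 * (sin t)\<^sup>2) * sqrt (1 - q\<^sup>2 * (sin t)\<^sup>2))"

lemma sincos_radicand_has_derivative:
  assumes q: "q\<^sup>2 < 1"
  shows "(sincos_radicand q has_real_derivative sincos_radicand_dt q t) (at t)"
proof -
  define r where "r = sqrt (1 - q\<^sup>2 * (sin t)\<^sup>2)"
  have D: "0 < 1 - q\<^sup>2 * (sin t)\<^sup>2" using radicand_pos[OF q] .
  have r: "r > 0" "r * r = 1 - q\<^sup>2 * (sin t)\<^sup>2" using D by (simp_all add: r_def)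
  have dr: "((\<lambda>t. sqrt (1 - q\<^sup>2 * (sin t)\<^sup>2)) has_real_derivative
     inverse r / 2 * (- (q\<^sup>2 * (2 * sin t * cos t)))) (at t)"
  proof -
    have "((\<lambda>t. 1 - q\<^sup>2 * (sin t)\<^sup>2) has_real_derivative - (q\<^sup>2 * (2 * sin t * cos t))) (at t)"
      by (auto intro!: derivative_eq_intros)
    from DERIV_chain2[OF DERIV_real_sqrt[OF D] this] show ?thesis by (simp add: r_def)
  qed
  have dn: "((\<lambda>t. sin t * cos t) has_real_derivative cos t * cos t - sin t * sin t) (at t)"
    by (auto intro!: derivative_eq_intros)
  have "(sincos_radicand q has_real_derivative
     ((cos t * cos t - sin t * sin t) * r - sin t * cos t * (inverse r / 2 * (- (q\<^sup>2 * (2 * sin t * cos t))))) / (r * r)) (at t)"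
    unfolding sincos_radicand_def[abs_def] r_def
    by (rule DERIV_divide[OF dn dr[unfolded r_def]]) (use D in simp)
  moreover have "((cos t * cos t - sin t * sin t) * r - sin t * cos t * (inverse r / 2 * (- (q\<^sup>2 * (2 * sin t * cos t))))) / (r * r)
      = sincos_radicand_dt q t"
  proof -
    have c2: "cos t * cos t = 1 - sin t * sin t"
      using sin_cos_squared_add[of t] by (simp add: power2_eq_square)
    have "((cos t * cos t - sin t * sin t) * r - sin t * cos t * (inverse r / 2 * (- (q\<^sup>2 * (2 * sin t * cos t))))) / (r * r)
        = ((cos t * cos t - sin t * sin t) * (r * r) + q\<^sup>2 * (sin t * sin t) * (cos t * cos t)) / ((r * r) * r)"
      using r by (simp add: field_simps)
    also have "\<dots> = (1 - 2 * (sin t)\<^sup>2 + q\<^sup>2 * (sin t)^4) / ((1 - q\<^sup>2 * (sin t)\<^sup>2) * r)"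
      unfolding c2 r(2) by (simp add: algebra_simps power2_eq_square power4_eq_xxxx)
    finally show ?thesis by (simp add: sincos_radicand_dt_def r_def)
  qed
  ultimately show ?thesis by simp
qed

lemma sincos_radicand_dt_has_integral:
  assumes "q\<^sup>2 < 1"
  shows "(sincos_radicand_dt q has_integral 0) {0..pi/2}"
proof -
  have "(sincos_radicand_dt q has_integral (sincos_radicand q (pi/2) - sincos_radicand q 0)) {0..pi/2}"
    by (rule fundamental_theorem_of_calculus)
       (auto intro!: DERIV_subset[OF sincos_radicand_has_derivative[OF assms]]
         simp: has_real_derivative_iff_has_vector_derivative[symmetric])
  then show ?thesis by (simp add: sincos_radicand_def)
qed

lemma ellF_integrand_dq_eq:
  assumes q: "0 < q" "q < 1"
  shows "ellF_integrand_dq q t = 1 / (q * (1 - q\<^sup>2)) * ellE_integrand q t - 1 / q * ellF_integrand q t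
    - q / (1 - q\<^sup>2) * sincos_radicand_dt q t"
proof -
  define r where "r = sqrt (1 - q\<^sup>2 * (sin t)\<^sup>2)"
  define s where "s = (sin t)\<^sup>2"
  define A where "A = 1 / (q * (1 - q\<^sup>2))"
  define B where "B = - 1 / q"
  define C where "C = - q / (1 - q\<^sup>2)"
  have q2: "q\<^sup>2 < 1" using square_less_1[OF q] .
  have D: "1 - q\<^sup>2 * s \<noteq> 0" using radicand_pos[OF q2, of t] by (simp add: s_def)
  have r: "r > 0" "r * r = 1 - q\<^sup>2 * s" using radicand_pos[OF q2, of t] by (simp_all add: r_def s_def)
  have "A * (r * r) * (1 - q\<^sup>2 * s) + B * (1 - q\<^sup>2 * s) + C * (1 - 2 * s + q\<^sup>2 * s\<^sup>2) = q * s"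
  proof -
    let ?D = "1 - q\<^sup>2 * s" and ?Z = "1 - 2 * s + q\<^sup>2 * s\<^sup>2" and ?m = "q * (1 - q\<^sup>2)"
    have m: "?m \<noteq> 0" using q q2 by simp
    have a: "A * ?m = 1" and b: "B * ?m = - (1 - q\<^sup>2)" and c: "C * ?m = - q\<^sup>2"
      using m q q2 by (simp_all add: A_def B_def C_def power2_eq_square)
    have "(A * (r * r) * ?D + B * ?D + C * ?Z) * ?m = (A * ?m) * (?D * ?D) + (B * ?m) * ?D + (C * ?m) * ?Z"
      unfolding r(2) by (simp add: algebra_simps)
    also have "\<dots> = (q * s) * ?m" unfolding a b c by (simp add: algebra_simps power2_eq_square)
    finally show ?thesis using m by simp
  qed
  moreover have "A * r + B / r + C * ((1 - 2 * s + q\<^sup>2 * s\<^sup>2) / ((1 - q\<^sup>2 * s) * r))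
      = (A * (r * r) * (1 - q\<^sup>2 * s) + B * (1 - q\<^sup>2 * s) + C * (1 - 2 * s + q\<^sup>2 * s\<^sup>2)) / ((1 - q\<^sup>2 * s) * r)"
    using r D by (simp add: field_simps)
  ultimately have "A * r + B / r + C * ((1 - 2 * s + q\<^sup>2 * s\<^sup>2) / ((1 - q\<^sup>2 * s) * r)) = q * s / ((1 - q\<^sup>2 * s) * r)"
    by simp
  moreover have "(sin t)^4 = s\<^sup>2" by (simp add: s_def power2_eq_square power4_eq_xxxx)
  moreover have "sqrt (1 - q\<^sup>2 * s) = r" by (simp add: r_def s_def)
  ultimately show ?thesis
    by (simp add: ellF_integrand_dq_def ellE_integrand_def ellF_integrand_def sincos_radicand_dt_def
        s_def[symmetric] A_def B_def C_def)
qed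

lemma ellK_has_real_derivative:
  assumes q: "0 < q" "q < 1"
  shows "(ellK has_real_derivative ellEc q / (q * (1 - q\<^sup>2)) - ellK q / q) (at q)"
proof -
  have "((\<lambda>t. 1 / (q * (1 - q\<^sup>2)) * ellE_integrand q t - 1 / q * ellF_integrand q t
      - q / (1 - q\<^sup>2) * sincos_radicand_dt q t)
      has_integral 1 / (q * (1 - q\<^sup>2)) * ellEc q - 1 / q * ellK q - q / (1 - q\<^sup>2) * 0) {0..pi/2}"
    using square_less_1[OF q]
    by (intro has_integral_diff has_integral_mult_right ellE_integrand_has_integral
        ellF_integrand_has_integral sincos_radicand_dt_has_integral)
  moreover have "ellF_integrand_dq q = (\<lambda>t. 1 / (q * (1 - q\<^sup>2)) * ellE_integrand q t
      - 1 / q * ellF_integrand q t - q / (1 - q\<^sup>2) * sincos_radicand_dt q t)"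
    using ellF_integrand_dq_eq[OF q] by blast
  ultimately have "integral {0..pi/2} (ellF_integrand_dq q) = ellEc q / (q * (1 - q\<^sup>2)) - ellK q / q"
    by (simp add: integral_unique)
  with ellK_has_derivative_integral[of q] q show ?thesis by simp
qed

lemma integral_ge_const_real:
  fixes f :: "real \<Rightarrow> real"
  assumes "continuous_on {a..b} f" "a \<le> b" "\<And>x. x \<in> {a..b} \<Longrightarrow> c \<le> f x"
  shows "(b - a) * c \<le> integral {a..b} f"
  using has_integral_le[OF has_integral_const_real[of c a b] integrable_integral[OF integrable_continuous_real[OF assms(1)]]]
    assms(2,3) by simp

lemma integral_le_const_real:
  fixes f :: "real \<Rightarrow> real"
  assumes "continuous_on {a..b} f" "a \<le> b" "\<And>x. x \<in> {a..b} \<Longrightarrow> f x \<le> c"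
  shows "integral {a..b} f \<le> (b - a) * c"
  using has_integral_le[OF integrable_integral[OF integrable_continuous_real[OF assms(1)]] has_integral_const_real[of c a b]]
    assms(2,3) by simp

lemma ellEc_le_ellK: "q\<^sup>2 < 1 \<Longrightarrow> ellEc q \<le> ellK q"
  by (rule has_integral_le[OF ellE_integrand_has_integral ellF_integrand_has_integral
        ellE_integrand_le_ellF_integrand])

lemma ellK_ge_pi_half: "q\<^sup>2 < 1 \<Longrightarrow> pi / 2 \<le> ellK q"
  using integral_ge_const_real[OF continuous_on_subset[OF continuous_on_ellF_integrand], of q 0 "pi/2" 1]
    ellF_integrand_ge_1 by (simp add: ellK_eq_integral)

lemma ellEc_le_pi_half: "q\<^sup>2 < 1 \<Longrightarrow> ellEc q \<le> pi / 2"
  using integral_le_const_real[OF continuous_on_subset[OF continuous_on_ellE_integrand], of 0 "pi/2" q 1]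
    ellE_integrand_le_1 by (simp add: ellEc_eq_integral)

lemma cos_le_ellE_integrand:
  assumes q: "q\<^sup>2 < 1" and t: "t \<in> {0..pi/2}"
  shows "cos t \<le> ellE_integrand q t"
proof (rule ellE_integrand_ge)
  show "0 \<le> cos t" using t by (intro cos_ge_zero) auto
  have "q\<^sup>2 * (sin t)\<^sup>2 \<le> (sin t)\<^sup>2" using q by (simp add: mult_left_le_one_le)
  then show "(cos t)\<^sup>2 \<le> 1 - q\<^sup>2 * (sin t)\<^sup>2" using sin_cos_squared_add[of t] by linarith
qed

lemma ellEc_ge_1:
  assumes q: "q\<^sup>2 < 1"
  shows "1 \<le> ellEc q"
proof -
  have "(cos has_integral (sin (pi/2) - sin 0)) {0..pi/2}"
    by (rule fundamental_theorem_of_calculus)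
       (auto intro!: derivative_eq_intros simp: has_real_derivative_iff_has_vector_derivative[symmetric])
  then have "(cos has_integral 1) {0..pi/2}" by simp
  from has_integral_le[OF this ellE_integrand_has_integral] cos_le_ellE_integrand[OF q]
  show ?thesis by blast
qed

lemma ellEc_pos: "q\<^sup>2 < 1 \<Longrightarrow> 0 < ellEc q"
  using ellEc_ge_1[of q] by linarith

lemma ellK_pos: "q\<^sup>2 < 1 \<Longrightarrow> 0 < ellK q"
  using ellK_ge_pi_half[of q] pi_gt_zero by linarith

lemma ellK_0: "ellK 0 = pi / 2"
proof -
  have "ellF_integrand 0 = (\<lambda>t. 1)" by (rule ext) (simp add: ellF_integrand_def)
  then show ?thesis by (simp add: ellK_eq_integral)
qed

lemma ellEc_0: "ellEc 0 = pi / 2"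
proof -
  have "ellE_integrand 0 = (\<lambda>t. 1)" by (rule ext) (simp add: ellE_integrand_def)
  then show ?thesis by (simp add: ellEc_eq_integral)
qed

lemma isCont_ellK: "- 1 < q \<Longrightarrow> q < 1 \<Longrightarrow> isCont ellK q"
  using ellK_has_derivative_integral[of q] DERIV_isCont by auto

lemma isCont_ellEc: "- 1 < q \<Longrightarrow> q < 1 \<Longrightarrow> isCont ellEc q"
  using ellEc_has_derivative_integral[of q] DERIV_isCont by auto

text \<open>For \<open>q = \<surd>(1 - e\<^sup>2)\<close> one has \<open>\<Delta>(t) \<le> e + (\<pi>/2 - t)\<close> on \<open>[0, \<pi>/2]\<close>,
  which integrates to the logarithmic lower bound on \<open>K\<close>.\<close>
lemma ellF_integrand_ge_near_1:
  assumes e: "0 < e" "e < 1" and t: "t \<in> {0..pi/2}"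
  shows "1 / (e + (pi/2 - t)) \<le> ellF_integrand (sqrt (1 - e\<^sup>2)) t"
proof -
  define q where "q = sqrt (1 - e\<^sup>2)"
  have e2: "e\<^sup>2 < 1" using e by (simp add: abs_square_less_1)
  have qq: "q\<^sup>2 = 1 - e\<^sup>2" using e2 by (simp add: q_def)
  have c0: "0 \<le> cos t" using t by (intro cos_ge_zero) auto
  have "cos t = sin (pi/2 - t)" by (simp add: cos_sin_eq)
  also have "\<dots> \<le> pi/2 - t" using t by (intro sin_x_le_x) auto
  finally have cle: "cos t \<le> pi/2 - t" .
  have "1 - q\<^sup>2 * (sin t)\<^sup>2 = (cos t)\<^sup>2 + e\<^sup>2 * (sin t)\<^sup>2"
    unfolding qq using sin_cos_squared_add[of t] by (simp add: algebra_simps)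
  also have "\<dots> \<le> (pi/2 - t)\<^sup>2 + e\<^sup>2"
    using power_mono[OF cle c0, of 2] sin_squared_le_1[of t] e
    by (smt (verit) mult_left_le zero_le_power2)
  also have "\<dots> \<le> (e + (pi/2 - t))\<^sup>2" using e t by (simp add: power2_eq_square algebra_simps)
  finally have "sqrt (1 - q\<^sup>2 * (sin t)\<^sup>2) \<le> e + (pi/2 - t)"
    using e t by (metis real_sqrt_le_mono real_sqrt_abs abs_of_nonneg add_nonneg_nonneg
        diff_ge_0_iff_ge atLeastAtMost_iff less_imp_le)
  moreover have "0 < sqrt (1 - q\<^sup>2 * (sin t)\<^sup>2)" using radicand_pos[of q t] qq e by simp
  ultimately show ?thesis by (simp add: ellF_integrand_def frac_le q_def[symmetric])
qed

lemma ellK_ge_minus_ln: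
  assumes e: "0 < e" "e < 1"
  shows "- ln e \<le> ellK (sqrt (1 - e\<^sup>2))"
proof -
  have "((\<lambda>t. 1 / (e + (pi/2 - t))) has_integral (- ln (e + (pi/2 - pi/2))) - (- ln (e + (pi/2 - 0)))) {0..pi/2}"
  proof (rule fundamental_theorem_of_calculus)
    fix t assume t: "t \<in> {0..pi/2}"
    have "((\<lambda>t. - ln (e + (pi/2 - t))) has_real_derivative 1 / (e + (pi/2 - t))) (at t)"
      using t e by (auto intro!: derivative_eq_intros)
    then have "((\<lambda>t. - ln (e + (pi/2 - t))) has_real_derivative 1 / (e + (pi/2 - t))) (at t within {0..pi/2})"
      by (rule DERIV_subset) simp
    then show "((\<lambda>t. - ln (e + (pi/2 - t))) has_vector_derivative 1 / (e + (pi/2 - t))) (at t within {0..pi/2})"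
      by (simp add: has_real_derivative_iff_has_vector_derivative)
  qed simp
  moreover have "e\<^sup>2 < 1" using e by (simp add: abs_square_less_1)
  then have "(sqrt (1 - e\<^sup>2))\<^sup>2 < 1" using e by simp
  ultimately have "ln (e + pi/2) - ln e \<le> ellK (sqrt (1 - e\<^sup>2))"
    using has_integral_le[OF _ ellF_integrand_has_integral ellF_integrand_ge_near_1[OF e]] by simp
  moreover have "0 \<le> ln (e + pi/2)" using e pi_gt3 by simp
  ultimately show ?thesis by simp
qed

lemma ellK_unbounded: "\<exists>q. 0 < q \<and> q < 1 \<and> 3/4 \<le> q\<^sup>2 \<and> M \<le> ellK q"
proof -
  define e where "e = exp (- max M 1)"
  have e0: "0 < e" by (simp add: e_def)
  have "2 \<le> exp (max M 1)" using exp_ge_add_one_self[of "max M 1"] by linarith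
  then have e_le: "e \<le> 1/2" by (simp add: e_def exp_minus field_simps)
  then have e2: "e\<^sup>2 \<le> 1/4" using e0 power_mono[OF e_le, of 2] by (simp add: power2_eq_square)
  show ?thesis
  proof (intro exI conjI)
    show "0 < sqrt (1 - e\<^sup>2)" "sqrt (1 - e\<^sup>2) < 1" using e0 e2 by simp_all
    show "3/4 \<le> (sqrt (1 - e\<^sup>2))\<^sup>2" using e2 by simp
    have "M \<le> - ln e" by (simp add: e_def)
    also have "\<dots> \<le> ellK (sqrt (1 - e\<^sup>2))" using e0 e_le by (intro ellK_ge_minus_ln) auto
    finally show "M \<le> ellK (sqrt (1 - e\<^sup>2))" .
  qed
qed

lemma sin_squared_mono:
  assumes "0 \<le> t" "t \<le> x" "x \<le> pi/2"
  shows "(sin t)\<^sup>2 \<le> (sin x)\<^sup>2"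
proof -
  have "0 \<le> sin t" using assms by (intro sin_ge_zero) auto
  moreover have "sin t \<le> sin x" using assms by (intro sin_monotone_2pi_le) auto
  ultimately show ?thesis by (simp add: power_mono)
qed

definition inv_sqrt2 :: real where "inv_sqrt2 = 1 / sqrt 2"

lemma inv_sqrt2_squared: "inv_sqrt2\<^sup>2 = 1/2"
  by (simp add: inv_sqrt2_def power_divide)

lemma inv_sqrt2_pos: "0 < inv_sqrt2"
  by (simp add: inv_sqrt2_def)

lemma ellK_less_2_ellEc_at_inv_sqrt2: "ellK inv_sqrt2 < 2 * ellEc inv_sqrt2"
proof -
  define q where "q = inv_sqrt2"
  have qq: "q\<^sup>2 = 1/2" by (simp add: q_def inv_sqrt2_squared)
  have q2: "q\<^sup>2 < 1" using qq by simp
  have s45: "(sin (pi/4))\<^sup>2 = 1/2" by (simp add: sin_45 power_divide)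
  have "ellEc q = integral {0..pi/4} (ellE_integrand q) + integral {pi/4..pi/2} (ellE_integrand q)"
    unfolding ellEc_eq_integral
    by (rule Henstock_Kurzweil_Integration.integral_combine[symmetric])
       (auto intro: integrable_continuous_real continuous_on_subset[OF continuous_on_ellE_integrand])
  moreover have "(pi/4 - 0) * (86/100) \<le> integral {0..pi/4} (ellE_integrand q)"
  proof (rule integral_ge_const_real[OF continuous_on_subset[OF continuous_on_ellE_integrand]])
    fix t assume t: "t \<in> {0..pi/4}"
    have "(sin t)\<^sup>2 \<le> 1/2" using sin_squared_mono[of t "pi/4"] t s45 by auto
    from radicand_antimono[OF this, of q] qq show "86/100 \<le> ellE_integrand q t"
      by (intro ellE_integrand_ge) (auto simp: power2_eq_square)
  qed auto
  moreover have "(pi/2 - pi/4) * (7/10) \<le> integral {pi/4..pi/2} (ellE_integrand q)"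
  proof (rule integral_ge_const_real[OF continuous_on_subset[OF continuous_on_ellE_integrand]])
    fix t
    from radicand_ge_1_minus_q_squared[of q t] qq show "7/10 \<le> ellE_integrand q t"
      by (intro ellE_integrand_ge) (auto simp: power2_eq_square)
  qed auto
  moreover have "ellK q \<le> (pi/2 - 0) * (142/100)"
    unfolding ellK_eq_integral
  proof (rule integral_le_const_real[OF continuous_on_subset[OF continuous_on_ellF_integrand[OF q2]]])
    fix t
    from radicand_ge_1_minus_q_squared[of q t] qq show "ellF_integrand q t \<le> 142/100"
      by (intro ellF_integrand_le q2) (auto simp: power2_eq_square)
  qed auto
  ultimately show ?thesis unfolding q_def[symmetric] by (simp add: algebra_simps) (use pi_gt_zero in linarith)
qed

lemma ellK_le_317:
  assumes q: "q\<^sup>2 \<le> 86/100"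
  shows "ellK q \<le> 317/100"
proof -
  have q2: "q\<^sup>2 < 1" using q by simp
  have s60: "(sin (pi/3))\<^sup>2 = 3/4" by (simp add: sin_60 power_divide)
  have "ellK q = integral {0..pi/3} (ellF_integrand q) + integral {pi/3..pi/2} (ellF_integrand q)"
    unfolding ellK_eq_integral
    by (rule Henstock_Kurzweil_Integration.integral_combine[symmetric])
       (auto intro: integrable_continuous_real continuous_on_subset[OF continuous_on_ellF_integrand[OF q2]])
  moreover have "integral {0..pi/3} (ellF_integrand q) \<le> (pi/3 - 0) * (168/100)"
  proof (rule integral_le_const_real[OF continuous_on_subset[OF continuous_on_ellF_integrand[OF q2]]])
    fix t assume t: "t \<in> {0..pi/3}"
    have "(sin t)\<^sup>2 \<le> 3/4" using sin_squared_mono[of t "pi/3"] t s60 by auto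
    from radicand_antimono[OF this, of q] q have "355/1000 \<le> 1 - q\<^sup>2 * (sin t)\<^sup>2" by linarith
    then show "ellF_integrand q t \<le> 168/100" by (intro ellF_integrand_le q2) (auto simp: power2_eq_square)
  qed auto
  moreover have "integral {pi/3..pi/2} (ellF_integrand q) \<le> (pi/2 - pi/3) * (268/100)"
  proof (rule integral_le_const_real[OF continuous_on_subset[OF continuous_on_ellF_integrand[OF q2]]])
    fix t
    from radicand_ge_1_minus_q_squared[of q t] q have "14/100 \<le> 1 - q\<^sup>2 * (sin t)\<^sup>2" by linarith
    then show "ellF_integrand q t \<le> 268/100" by (intro ellF_integrand_le q2) (auto simp: power2_eq_square)
  qed auto
  moreover have "pi \<le> 31416 / 10000" using pi_approx(2) by simp
  ultimately show ?thesis by (simp add: algebra_simps)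
qed

section \<open>The zero q_star of 2E - K\<close>

lemma strict_mono_on_if_derivative_pos:
  fixes f :: "real \<Rightarrow> real"
  assumes I: "convex I" and cont: "continuous_on I f"
    and deriv: "\<And>x. x \<in> interior I \<Longrightarrow> \<exists>y. (f has_real_derivative y) (at x) \<and> 0 < y"
  shows "strict_mono_on I f"
proof (rule strict_mono_onI)
  fix r s assume rs: "r \<in> I" "s \<in> I" "r < s"
  have "is_interval I" using I is_interval_convex_1 by blast
  have sub: "{r..s} \<subseteq> I"
  proof
    fix x assume "x \<in> {r..s}"
    then have "r \<le> x" "x \<le> s" by simp_all
    then show "x \<in> I" by (rule mem_is_interval_1_I[OF \<open>is_interval I\<close> rs(1,2)])
  qed
  have "{r<..<s} \<subseteq> {r..s}" by auto
  then have int: "{r<..<s} \<subseteq> interior I"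
    using interior_maximal[OF _ open_greaterThanLessThan] sub by blast
  have "\<exists>y. (f has_real_derivative y) (at x) \<and> 0 < y" if "r < x" "x < s" for x
  proof (rule deriv)
    show "x \<in> interior I" using int that by auto
  qed
  with continuous_on_subset[OF cont sub] show "f r < f s"
    using DERIV_pos_imp_increasing_open[OF rs(3)] by blast
qed

lemma strict_antimono_on_if_derivative_neg:
  fixes f :: "real \<Rightarrow> real"
  assumes I: "convex I" and cont: "continuous_on I f"
    and deriv: "\<And>x. x \<in> interior I \<Longrightarrow> \<exists>y. (f has_real_derivative y) (at x) \<and> y < 0"
  shows "strict_antimono_on I f"
proof -
  have "strict_mono_on I (\<lambda>x. - f x)"
  proof (rule strict_mono_on_if_derivative_pos[OF I])
    show "continuous_on I (\<lambda>x. - f x)" using cont by (rule continuous_on_minus)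
    show "\<exists>y. ((\<lambda>x. - f x) has_real_derivative y) (at x) \<and> 0 < y" if x: "x \<in> interior I" for x
    proof -
      obtain y where "(f has_real_derivative y) (at x)" "y < 0" using deriv[OF x] by blast
      then show ?thesis using DERIV_minus neg_0_less_iff_less by blast
    qed
  qed
  then show ?thesis by (simp add: monotone_on_def)
qed

lemma THE_eq_if_inj_on:
  assumes "inj_on g A" "x \<in> A" "g x = c"
  shows "(THE y. y \<in> A \<and> g y = c) = x"
  using assms by (auto intro!: the_equality dest: inj_onD)

lemma inj_on_if_strict_antimono_on:
  fixes f :: "'a::linorder \<Rightarrow> 'b::order"
  shows "strict_antimono_on S f \<Longrightarrow> inj_on f S"
  by (simp add: strict_antimono_iff_antimono)

definition two_E_minus_K :: "real \<Rightarrow> real" where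
  "two_E_minus_K q = 2 * ellEc q - ellK q"

lemma two_E_minus_K_has_real_derivative:
  assumes q: "0 < q" "q < 1"
  shows "(two_E_minus_K has_real_derivative
     ((1 - 2 * q\<^sup>2) * ellEc q - (1 - q\<^sup>2) * ellK q) / (q * (1 - q\<^sup>2))) (at q)"
proof -
  have D: "(two_E_minus_K has_real_derivative
      2 * ((ellEc q - ellK q) / q) - (ellEc q / (q * (1 - q\<^sup>2)) - ellK q / q)) (at q)"
    unfolding two_E_minus_K_def[abs_def]
    by (intro DERIV_diff DERIV_cmult ellEc_has_real_derivative[OF q] ellK_has_real_derivative[OF q])
  moreover have "q * (1 - q\<^sup>2) \<noteq> 0" using q square_less_1[OF q] by simp
  then have "2 * ((ellEc q - ellK q) / q) - (ellEc q / (q * (1 - q\<^sup>2)) - ellK q / q)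
      = (2 * (ellEc q - ellK q) * (1 - q\<^sup>2) - ellEc q + ellK q * (1 - q\<^sup>2)) / (q * (1 - q\<^sup>2))"
    by (simp add: field_simps)
  also have "\<dots> = ((1 - 2 * q\<^sup>2) * ellEc q - (1 - q\<^sup>2) * ellK q) / (q * (1 - q\<^sup>2))"
    by (simp add: algebra_simps)
  finally show ?thesis using D by simp
qed

lemma two_E_minus_K_derivative_neg:
  assumes q: "0 < q" "q < 1"
  shows "((1 - 2 * q\<^sup>2) * ellEc q - (1 - q\<^sup>2) * ellK q) / (q * (1 - q\<^sup>2)) < 0"
proof -
  have q2: "q\<^sup>2 < 1" using square_less_1[OF q] .
  have "(1 - 2 * q\<^sup>2) * ellEc q - (1 - q\<^sup>2) * ellK q \<le> (1 - 2 * q\<^sup>2) * ellEc q - (1 - q\<^sup>2) * ellEc q"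
    using ellEc_le_ellK[OF q2] q2 by (simp add: mult_left_mono)
  also have "\<dots> < 0" using ellEc_pos[OF q2] q by (simp add: algebra_simps)
  finally show ?thesis using q q2 by (simp add: divide_neg_pos)
qed

lemma isCont_two_E_minus_K: "- 1 < q \<Longrightarrow> q < 1 \<Longrightarrow> isCont two_E_minus_K q"
  unfolding two_E_minus_K_def[abs_def] by (intro continuous_intros isCont_ellEc isCont_ellK)

lemma continuous_on_two_E_minus_K: "S \<subseteq> {0..<1} \<Longrightarrow> continuous_on S two_E_minus_K"
  by (intro continuous_at_imp_continuous_on ballI isCont_two_E_minus_K) auto

lemma two_E_minus_K_strict_antimono: "strict_antimono_on {0..<1} two_E_minus_K"
proof (rule strict_antimono_on_if_derivative_neg)
  show "continuous_on {0..<1} two_E_minus_K" by (rule continuous_on_two_E_minus_K) simp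
  fix x assume "x \<in> interior {0..<1::real}"
  then have x: "0 < x" "x < 1" by auto
  show "\<exists>y. (two_E_minus_K has_real_derivative y) (at x) \<and> y < 0"
    using two_E_minus_K_has_real_derivative[OF x] two_E_minus_K_derivative_neg[OF x] by blast
qed simp

lemma q_star_props: "0 \<le> q_star \<and> q_star < 1 \<and> two_E_minus_K q_star = 0"
proof -
  obtain q0 where q0: "0 < q0" "q0 < 1" "pi + 1 \<le> ellK q0" using ellK_unbounded[of "pi + 1"] by blast
  have "two_E_minus_K q0 \<le> 0"
    using ellEc_le_pi_half[OF square_less_1[OF q0(1,2)]] q0 by (simp add: two_E_minus_K_def)
  moreover have "0 \<le> two_E_minus_K 0" by (simp add: two_E_minus_K_def ellK_0 ellEc_0)
  moreover have "0 \<le> q0" using q0 by simp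
  moreover have "continuous_on {0..q0} two_E_minus_K"
    using q0 by (intro continuous_on_two_E_minus_K) auto
  ultimately obtain x where x: "0 \<le> x" "x \<le> q0" "two_E_minus_K x = 0"
    using IVT2' by blast
  have "(THE y. y \<in> {0..<1} \<and> two_E_minus_K y = 0) = x"
    by (rule THE_eq_if_inj_on[OF inj_on_if_strict_antimono_on[OF two_E_minus_K_strict_antimono]])
       (use x q0 in auto)
  then have "q_star = x"
    unfolding q_star_def two_E_minus_K_def[symmetric] by (simp add: conj_assoc)
  then show ?thesis using x q0 by simp
qed

lemma two_E_minus_K_pos: "0 \<le> q \<Longrightarrow> q < q_star \<Longrightarrow> 0 < two_E_minus_K q"
  using monotone_onD[OF two_E_minus_K_strict_antimono, of q q_star] q_star_props by auto

lemma two_E_minus_K_neg: "q_star < q \<Longrightarrow> q < 1 \<Longrightarrow> two_E_minus_K q < 0"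
  using monotone_onD[OF two_E_minus_K_strict_antimono, of q_star q] q_star_props by auto

section \<open>The zero q_hat of f\<close>

lemma f_aux_has_real_derivative:
  assumes q: "0 < q" "q < 1"
  shows "(f_aux has_real_derivative q * ((20 * q\<^sup>2 - 13) * ellK q - 20 * (2 * q\<^sup>2 - 1) * ellEc q)) (at q)"
proof -
  have q2: "q\<^sup>2 < 1" using square_less_1[OF q] .
  have P1: "((\<lambda>q. 4*q^4 - 5*q\<^sup>2 + 1) has_real_derivative 16*q^3 - 10*q) (at q)"
    by (auto intro!: derivative_eq_intros simp: power2_eq_square power3_eq_cube)
  have P2: "((\<lambda>q. -8*q^4 + 8*q\<^sup>2 - 1) has_real_derivative -32*q^3 + 16*q) (at q)"
    by (auto intro!: derivative_eq_intros simp: power2_eq_square power3_eq_cube)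
  have D: "(f_aux has_real_derivative
      (16*q^3 - 10*q) * ellK q + (ellEc q / (q * (1 - q\<^sup>2)) - ellK q / q) * (4*q^4 - 5*q\<^sup>2 + 1)
    + ((-32*q^3 + 16*q) * ellEc q + ((ellEc q - ellK q) / q) * (-8*q^4 + 8*q\<^sup>2 - 1))) (at q)"
    unfolding f_aux_def[abs_def] by (intro DERIV_add DERIV_mult P1 P2 ellK_has_real_derivative[OF q] ellEc_has_real_derivative[OF q])
  have m: "q \<noteq> 0" "1 - q\<^sup>2 \<noteq> 0" using q q2 by auto
  have a: "(ellEc q / (q * (1 - q\<^sup>2)) - ellK q / q) * (4*q^4 - 5*q\<^sup>2 + 1)
     = ((1 - 4*q\<^sup>2) * ellEc q - (1 - 4*q\<^sup>2) * (1 - q\<^sup>2) * ellK q) / q"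
  proof -
    have "4*q^4 - 5*q\<^sup>2 + 1 = (1 - q\<^sup>2) * (1 - 4*q\<^sup>2)" by (simp add: algebra_simps power2_eq_square power4_eq_xxxx)
    then show ?thesis using m by (simp add: field_simps)
  qed
  have "(16*q^3 - 10*q) * ellK q + ((1 - 4*q\<^sup>2) * ellEc q - (1 - 4*q\<^sup>2) * (1 - q\<^sup>2) * ellK q) / q
    + ((-32*q^3 + 16*q) * ellEc q + ((ellEc q - ellK q) / q) * (-8*q^4 + 8*q\<^sup>2 - 1))
    = q * ((20 * q\<^sup>2 - 13) * ellK q - 20 * (2 * q\<^sup>2 - 1) * ellEc q)"
  proof -
    have "q * ((16*q^3 - 10*q) * ellK q + ((1 - 4*q\<^sup>2) * ellEc q - (1 - 4*q\<^sup>2) * (1 - q\<^sup>2) * ellK q) / q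
    + ((-32*q^3 + 16*q) * ellEc q + ((ellEc q - ellK q) / q) * (-8*q^4 + 8*q\<^sup>2 - 1)))
      = q * (16*q^3 - 10*q) * ellK q + ((1 - 4*q\<^sup>2) * ellEc q - (1 - 4*q\<^sup>2) * (1 - q\<^sup>2) * ellK q)
    + (q * (-32*q^3 + 16*q) * ellEc q + (ellEc q - ellK q) * (-8*q^4 + 8*q\<^sup>2 - 1))"
      using m by (simp add: field_simps)
    also have "\<dots> = q * (q * ((20 * q\<^sup>2 - 13) * ellK q - 20 * (2 * q\<^sup>2 - 1) * ellEc q))"
      by (simp add: algebra_simps power2_eq_square power3_eq_cube power4_eq_xxxx)
    finally show ?thesis using m by simp
  qed
  with D a show ?thesis by simp
qed

lemma continuous_on_f_aux:
  assumes "0 < a" "b < 1"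
  shows "continuous_on {a..b} f_aux"
proof (intro continuous_at_imp_continuous_on ballI)
  fix x assume "x \<in> {a..b}"
  then have "0 < x" "x < 1" using assms by auto
  then show "isCont f_aux x" using f_aux_has_real_derivative DERIV_isCont by blast
qed

lemma sqrt_less_imp_less_square: "0 \<le> a \<Longrightarrow> sqrt a < q \<Longrightarrow> a < q\<^sup>2"
  using power_strict_mono[of "sqrt a" q 2] by simp

lemma f_aux_derivative_neg:
  assumes x: "0 < x" "x < 1" "1/2 < x\<^sup>2" "x\<^sup>2 \<le> 86/100"
  shows "x * ((20 * x\<^sup>2 - 13) * ellK x - 20 * (2 * x\<^sup>2 - 1) * ellEc x) < 0"
proof -
  have x2: "x\<^sup>2 < 1" using square_less_1[OF x(1,2)] .
  have K: "ellK x \<le> 317/100" using ellK_le_317 x(4) .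
  have Kp: "0 < ellK x" using ellK_pos[OF x2] .
  have E: "1 \<le> ellEc x" using ellEc_ge_1[OF x2] .
  have "(20 * x\<^sup>2 - 13) * ellK x < 20 * (2 * x\<^sup>2 - 1) * ellEc x"
  proof (cases "20 * x\<^sup>2 \<le> 13")
    case True
    then have "(20 * x\<^sup>2 - 13) * ellK x \<le> 0" using Kp by (simp add: mult_nonpos_nonneg)
    moreover have "0 < 20 * (2 * x\<^sup>2 - 1) * ellEc x" using x E by simp
    ultimately show ?thesis by linarith
  next
    case False
    have "(20 * x\<^sup>2 - 13) * ellK x \<le> (20 * x\<^sup>2 - 13) * (317/100)"
      using False K by (intro mult_left_mono) auto
    also have "\<dots> < 20 * (2 * x\<^sup>2 - 1)" using x by simp
    also have "\<dots> \<le> 20 * (2 * x\<^sup>2 - 1) * ellEc x" using x E by simp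
    finally show ?thesis .
  qed
  then show ?thesis using x by (simp add: mult_pos_neg)
qed

lemma f_aux_strict_antimono: "strict_antimono_on {inv_sqrt2..sqrt (43/50)} f_aux"
proof (rule strict_antimono_on_if_derivative_neg)
  show "continuous_on {inv_sqrt2..sqrt (43/50)} f_aux"
    using inv_sqrt2_pos by (intro continuous_on_f_aux) simp_all
  fix x assume "x \<in> interior {inv_sqrt2..sqrt (43/50)}"
  then have x: "inv_sqrt2 < x" "x < sqrt (43/50)" by auto
  then have "inv_sqrt2\<^sup>2 < x\<^sup>2" "x\<^sup>2 < (sqrt (43/50))\<^sup>2"
    using inv_sqrt2_pos by (intro power_strict_mono; simp)+
  then have "1/2 < x\<^sup>2" "x\<^sup>2 \<le> 86/100" by (simp_all add: inv_sqrt2_squared)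
  moreover have "0 < x" "x < 1" using x inv_sqrt2_pos less_trans[OF x(2), of 1] by auto
  ultimately show "\<exists>y. (f_aux has_real_derivative y) (at x) \<and> y < 0"
    using f_aux_has_real_derivative f_aux_derivative_neg by blast
qed auto

lemma f_aux_neg:
  assumes q: "0 < q" "q < 1" "86/100 \<le> q\<^sup>2"
  shows "f_aux q < 0"
proof -
  have q2: "q\<^sup>2 < 1" using square_less_1[OF q(1,2)] .
  define y where "y = q\<^sup>2"
  have q4: "q^4 = y\<^sup>2" by (simp add: y_def power2_eq_square power4_eq_xxxx)
  have A: "4 * q^4 - 5 * q\<^sup>2 + 1 < 0"
  proof -
    have "4 * q^4 - 5 * q\<^sup>2 + 1 = - ((1 - y) * (4 * y - 1))" unfolding q4 y_def[symmetric]
      by (simp add: algebra_simps power2_eq_square)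
    moreover have "0 < (1 - y) * (4 * y - 1)" using q q2 by (simp add: y_def)
    ultimately show ?thesis by simp
  qed
  have B: "-8 * q^4 + 8 * q\<^sup>2 - 1 < 0"
  proof -
    have "0 \<le> (y - 86/100) * (y - 14/100)" using q by (simp add: y_def)
    moreover have "(y - 86/100) * (y - 14/100) = y\<^sup>2 - y + 1204/10000" by (simp add: field_simps power2_eq_square)
    ultimately have "0 \<le> y\<^sup>2 - y + 1204/10000" by simp
    then show ?thesis unfolding q4 y_def[symmetric] by simp
  qed
  have "(4 * q^4 - 5 * q\<^sup>2 + 1) * ellK q < 0" using A ellK_pos[OF q2] by (simp add: mult_neg_pos)
  moreover have "(-8 * q^4 + 8 * q\<^sup>2 - 1) * ellEc q < 0" using B ellEc_pos[OF q2] by (simp add: mult_neg_pos)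
  ultimately show ?thesis by (simp add: f_aux_def)
qed

lemma f_aux_inv_sqrt2_pos: "0 < f_aux inv_sqrt2"
proof -
  have "inv_sqrt2 ^ 4 = (inv_sqrt2\<^sup>2)\<^sup>2" by (simp add: power2_eq_square power4_eq_xxxx)
  also have "\<dots> = 1/4" unfolding inv_sqrt2_squared by (simp add: power2_eq_square)
  finally have q4: "inv_sqrt2 ^ 4 = 1/4" .
  have "f_aux inv_sqrt2 = ellEc inv_sqrt2 - ellK inv_sqrt2 / 2"
    by (simp add: f_aux_def q4 inv_sqrt2_squared)
  then show ?thesis using ellK_less_2_ellEc_at_inv_sqrt2 by simp
qed

lemma q_hat_props: "inv_sqrt2 < q_hat \<and> q_hat < sqrt (43/50) \<and> f_aux q_hat = 0"
proof -
  have r1: "0 < sqrt (43/50)" "sqrt (43/50) < 1" by simp_all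
  have f_r1: "f_aux (sqrt (43/50)) < 0" by (rule f_aux_neg) (use r1 in simp_all)
  have le: "inv_sqrt2 \<le> sqrt (43/50)" by (rule real_le_rsqrt) (simp add: inv_sqrt2_squared)
  have cont: "continuous_on {inv_sqrt2..sqrt (43/50)} f_aux"
    by (rule continuous_on_f_aux[OF inv_sqrt2_pos r1(2)])
  obtain x where x: "inv_sqrt2 \<le> x" "x \<le> sqrt (43/50)" "f_aux x = 0"
    using IVT2'[OF less_imp_le[OF f_r1] less_imp_le[OF f_aux_inv_sqrt2_pos] le cont] by blast
  have inj: "inj_on f_aux {inv_sqrt2..sqrt (43/50)}"
    by (rule inj_on_if_strict_antimono_on[OF f_aux_strict_antimono])
  have "q_hat = x"
    unfolding q_hat_def inv_sqrt2_def[symmetric]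
  proof (rule the_equality)
    have "x < 1" using x(2) r1(2) by linarith
    then show "inv_sqrt2 \<le> x \<and> x < 1 \<and> f_aux x = 0" using x by simp
    fix y assume y: "inv_sqrt2 \<le> y \<and> y < 1 \<and> f_aux y = 0"
    have "y \<le> sqrt (43/50)"
    proof (rule ccontr)
      assume "\<not> y \<le> sqrt (43/50)"
      then have "86/100 \<le> y\<^sup>2" using sqrt_less_imp_less_square[of "43/50" y] by simp
      then show False using f_aux_neg[of y] y inv_sqrt2_pos by simp
    qed
    then show "y = x" using inj_onD[OF inj, of y x] x y by simp
  qed
  moreover have "x \<noteq> inv_sqrt2" "x \<noteq> sqrt (43/50)" using x f_r1 f_aux_inv_sqrt2_pos by auto
  ultimately show ?thesis using x by simp
qed

lemma f_aux_pos_before_q_hat: "inv_sqrt2 \<le> q \<Longrightarrow> q < q_hat \<Longrightarrow> 0 < f_aux q"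
  using monotone_onD[OF f_aux_strict_antimono, of q q_hat] q_hat_props by auto

lemma f_aux_neg_after_q_hat:
  assumes "q_hat < q" "q < 1"
  shows "f_aux q < 0"
proof (cases "q \<le> sqrt (43/50)")
  case True
  then show ?thesis using monotone_onD[OF f_aux_strict_antimono, of q_hat q] q_hat_props assms by auto
next
  case False
  then have "86/100 \<le> q\<^sup>2" using sqrt_less_imp_less_square[of "43/50" q] by simp
  then show ?thesis using f_aux_neg[of q] assms q_hat_props inv_sqrt2_pos by simp
qed

lemma inv_sqrt2_less_q_star: "inv_sqrt2 < q_star"
proof (rule ccontr)
  assume "\<not> inv_sqrt2 < q_star"
  then have "two_E_minus_K inv_sqrt2 \<le> 0"
    using two_E_minus_K_neg[of inv_sqrt2] q_star_props inv_sqrt2_pos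
    by (cases "q_star = inv_sqrt2") (auto simp: inv_sqrt2_def)
  then show False using ellK_less_2_ellEc_at_inv_sqrt2 by (simp add: two_E_minus_K_def)
qed

lemma q_hat_less_q_star: "q_hat < q_star"
proof (rule ccontr)
  assume "\<not> q_hat < q_star"
  then have "0 \<le> f_aux q_star"
    using f_aux_pos_before_q_hat[of q_star] inv_sqrt2_less_q_star q_hat_props
    by (cases "q_star = q_hat") auto
  moreover have "1/2 < q_star\<^sup>2"
    using power_strict_mono[OF inv_sqrt2_less_q_star, of 2] inv_sqrt2_pos inv_sqrt2_squared by simp
  moreover have "q_star\<^sup>2 < 1" using q_star_props inv_sqrt2_less_q_star inv_sqrt2_pos square_less_1 by auto
  moreover have "ellK q_star = 2 * ellEc q_star" using q_star_props by (simp add: two_E_minus_K_def)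
  then have "f_aux q_star = (1 - 2 * q_star\<^sup>2) * ellEc q_star"
    by (simp add: f_aux_def algebra_simps power2_eq_square power4_eq_xxxx)
  ultimately have "f_aux q_star < 0" using ellEc_pos[of q_star] by (simp add: mult_neg_pos)
  then show False using \<open>0 \<le> f_aux q_star\<close> by simp
qed

section \<open>The branches q1, q2, q3 of the inverse of g\<close>

lemma g_aux_eq: "g_aux q = 8 * (two_E_minus_K q)\<^sup>2 * (2 * q\<^sup>2 - 1)"
  by (simp add: g_aux_def two_E_minus_K_def)

lemma g_aux_has_real_derivative:
  assumes q: "0 < q" "q < 1"
  shows "(g_aux has_real_derivative 16 * two_E_minus_K q * f_aux q / (q * (1 - q\<^sup>2))) (at q)"
proof -
  define d where "d = ((1 - 2 * q\<^sup>2) * ellEc q - (1 - q\<^sup>2) * ellK q) / (q * (1 - q\<^sup>2))"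
  have m: "q * (1 - q\<^sup>2) \<noteq> 0" using q square_less_1[OF q] by simp
  have P: "((\<lambda>q. 2 * q\<^sup>2 - 1) has_real_derivative 4 * q) (at q)"
    by (auto intro!: derivative_eq_intros)
  have H2: "((\<lambda>q. (two_E_minus_K q)\<^sup>2) has_real_derivative 2 * two_E_minus_K q * d) (at q)"
    using DERIV_power[OF two_E_minus_K_has_real_derivative[OF q], of 2] by (simp add: d_def ac_simps)
  have D: "(g_aux has_real_derivative
      8 * (2 * two_E_minus_K q * d) * (2 * q\<^sup>2 - 1) + 4 * q * (8 * (two_E_minus_K q)\<^sup>2)) (at q)"
    unfolding g_aux_eq[abs_def] using DERIV_mult[OF DERIV_cmult[OF H2, of 8] P] by simp
  have e: "d * (q * (1 - q\<^sup>2)) = (1 - 2 * q\<^sup>2) * ellEc q - (1 - q\<^sup>2) * ellK q"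
    using m by (simp add: d_def)
  have "(8 * (2 * two_E_minus_K q * d) * (2 * q\<^sup>2 - 1) + 4 * q * (8 * (two_E_minus_K q)\<^sup>2)) * (q * (1 - q\<^sup>2))
      = 16 * two_E_minus_K q * (d * (q * (1 - q\<^sup>2))) * (2 * q\<^sup>2 - 1) + 32 * q\<^sup>2 * (1 - q\<^sup>2) * (two_E_minus_K q)\<^sup>2"
    by (simp add: algebra_simps power2_eq_square)
  also have "\<dots> = 16 * two_E_minus_K q * f_aux q"
    unfolding e f_aux_def two_E_minus_K_def by (simp add: algebra_simps power2_eq_square power4_eq_xxxx)
  finally have "8 * (2 * two_E_minus_K q * d) * (2 * q\<^sup>2 - 1) + 4 * q * (8 * (two_E_minus_K q)\<^sup>2)
      = 16 * two_E_minus_K q * f_aux q / (q * (1 - q\<^sup>2))"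
    using m by (simp add: field_simps)
  with D show ?thesis by simp
qed

lemma continuous_on_g_aux:
  assumes "0 < a" "b < 1"
  shows "continuous_on {a..b} g_aux"
proof (intro continuous_at_imp_continuous_on ballI)
  fix x assume "x \<in> {a..b}"
  then have "0 < x" "x < 1" using assms by auto
  then show "isCont g_aux x" using g_aux_has_real_derivative DERIV_isCont by blast
qed

lemma g_aux_derivative_pos:
  assumes q: "0 < q" "q < 1" and pos: "0 < two_E_minus_K q * f_aux q"
  shows "\<exists>y. (g_aux has_real_derivative y) (at q) \<and> 0 < y"
proof -
  have "0 < q * (1 - q\<^sup>2)" using q square_less_1[OF q] by simp
  then have "0 < 16 * two_E_minus_K q * f_aux q / (q * (1 - q\<^sup>2))"
    using pos by (simp add: mult.assoc)
  then show ?thesis using g_aux_has_real_derivative[OF q] by blast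
qed

lemma g_aux_derivative_neg:
  assumes q: "0 < q" "q < 1" and neg: "two_E_minus_K q * f_aux q < 0"
  shows "\<exists>y. (g_aux has_real_derivative y) (at q) \<and> y < 0"
proof -
  have "0 < q * (1 - q\<^sup>2)" using q square_less_1[OF q] by simp
  moreover have "16 * two_E_minus_K q * f_aux q < 0"
    using neg mult.assoc[of 16 "two_E_minus_K q" "f_aux q"] by linarith
  ultimately have "16 * two_E_minus_K q * f_aux q / (q * (1 - q\<^sup>2)) < 0"
    by (simp add: divide_neg_pos)
  then show ?thesis using g_aux_has_real_derivative[OF q] by blast
qed

lemma zero_less_q_hat: "0 < q_hat"
  using inv_sqrt2_pos q_hat_props by linarith

lemma g_aux_strict_mono_below_q_hat: "strict_mono_on {inv_sqrt2..q_hat} g_aux"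
proof (rule strict_mono_on_if_derivative_pos)
  show "continuous_on {inv_sqrt2..q_hat} g_aux"
    using inv_sqrt2_pos q_hat_less_q_star q_star_props by (intro continuous_on_g_aux) auto
  fix x assume "x \<in> interior {inv_sqrt2..q_hat}"
  then have x: "inv_sqrt2 < x" "x < q_hat" by auto
  have "0 < x" "x < 1" using x inv_sqrt2_pos q_hat_less_q_star q_star_props by auto
  moreover have "0 < two_E_minus_K x" "0 < f_aux x"
    using x \<open>0 < x\<close> q_hat_less_q_star by (auto intro: two_E_minus_K_pos f_aux_pos_before_q_hat)
  ultimately show "\<exists>y. (g_aux has_real_derivative y) (at x) \<and> 0 < y"
    by (intro g_aux_derivative_pos) auto
qed simp

lemma g_aux_strict_antimono_between: "strict_antimono_on {q_hat..q_star} g_aux"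
proof (rule strict_antimono_on_if_derivative_neg)
  show "continuous_on {q_hat..q_star} g_aux"
    using zero_less_q_hat q_star_props by (intro continuous_on_g_aux) auto
  fix x assume "x \<in> interior {q_hat..q_star}"
  then have x: "q_hat < x" "x < q_star" by auto
  have "0 < x" "x < 1" using x zero_less_q_hat q_star_props by auto
  moreover have "0 < two_E_minus_K x" "f_aux x < 0"
    using x \<open>0 < x\<close> \<open>x < 1\<close> by (auto intro: two_E_minus_K_pos f_aux_neg_after_q_hat)
  ultimately show "\<exists>y. (g_aux has_real_derivative y) (at x) \<and> y < 0"
    by (intro g_aux_derivative_neg) (auto simp: mult_pos_neg)
qed simp

lemma g_aux_strict_mono_above_q_star: "strict_mono_on {q_star..<1} g_aux"
proof (rule strict_mono_on_if_derivative_pos)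
  show "continuous_on {q_star..<1} g_aux"
  proof (rule continuous_at_imp_continuous_on, rule ballI)
    fix x assume "x \<in> {q_star..<1}"
    then have "0 < x" "x < 1" using inv_sqrt2_pos inv_sqrt2_less_q_star by auto
    then show "isCont g_aux x" using g_aux_has_real_derivative DERIV_isCont by blast
  qed
  fix x assume "x \<in> interior {q_star..<1}"
  then have x: "q_star < x" "x < 1" by auto
  have "0 < x" using x inv_sqrt2_pos inv_sqrt2_less_q_star by auto
  moreover have "two_E_minus_K x < 0" "f_aux x < 0"
    using x q_hat_less_q_star by (auto intro: two_E_minus_K_neg f_aux_neg_after_q_hat)
  ultimately show "\<exists>y. (g_aux has_real_derivative y) (at x) \<and> 0 < y"
    using x by (intro g_aux_derivative_pos) (auto simp: mult_neg_neg)
qed simp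

lemma g_aux_inv_sqrt2: "g_aux inv_sqrt2 = 0"
  by (simp add: g_aux_def inv_sqrt2_squared)

lemma g_aux_q_star: "g_aux q_star = 0"
  using q_star_props by (simp add: g_aux_eq)

lemma g_aux_unbounded:
  assumes c: "0 < c"
  obtains q where "q_star < q" "q < 1" "c \<le> g_aux q"
proof -
  obtain q where q: "0 < q" "q < 1" "3/4 \<le> q\<^sup>2" and K: "pi + sqrt c \<le> ellK q"
    using ellK_unbounded by blast
  have h: "sqrt c \<le> - two_E_minus_K q"
    using ellEc_le_pi_half[OF square_less_1[OF q(1,2)]] K by (simp add: two_E_minus_K_def)
  then have "(sqrt c)\<^sup>2 \<le> (two_E_minus_K q)\<^sup>2"
    using power_mono[OF h, of 2] c by simp
  then have "c \<le> (two_E_minus_K q)\<^sup>2" using c by simp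
  moreover have "0 \<le> (two_E_minus_K q)\<^sup>2 * (4 * q\<^sup>2 - 3)" using q(3) by simp
  moreover have "g_aux q = 4 * (two_E_minus_K q)\<^sup>2 + 4 * ((two_E_minus_K q)\<^sup>2 * (4 * q\<^sup>2 - 3))"
    by (simp add: g_aux_eq algebra_simps)
  ultimately have "c \<le> g_aux q" by (smt (verit) zero_le_power2)
  moreover have "q_star < q"
  proof (rule ccontr)
    assume "\<not> q_star < q"
    then have "0 \<le> two_E_minus_K q"
      using two_E_minus_K_pos[of q] q q_star_props by (cases "q = q_star") auto
    moreover have "0 < sqrt c" using c by simp
    ultimately show False using h by linarith
  qed
  ultimately show ?thesis using that q by blast
qed

lemma q1_props:
  assumes c: "0 < c" "c \<le> lambda_hat"
  shows "inv_sqrt2 < q1 c \<and> q1 c \<le> q_hat \<and> g_aux (q1 c) = c"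
proof -
  have "continuous_on {inv_sqrt2..q_hat} g_aux"
    using inv_sqrt2_pos q_hat_less_q_star q_star_props by (intro continuous_on_g_aux) auto
  moreover have "g_aux inv_sqrt2 \<le> c" "c \<le> g_aux q_hat" "inv_sqrt2 \<le> q_hat"
    using c q_hat_props g_aux_inv_sqrt2 by (simp_all add: lambda_hat_def)
  ultimately obtain x where x: "inv_sqrt2 \<le> x" "x \<le> q_hat" "g_aux x = c"
    using IVT' by blast
  then have x': "x \<in> {inv_sqrt2<..q_hat}" using c g_aux_inv_sqrt2 by (cases "x = inv_sqrt2") auto
  have "inj_on g_aux {inv_sqrt2<..q_hat}"
    by (rule inj_on_subset[OF strict_mono_on_imp_inj_on[OF g_aux_strict_mono_below_q_hat]]) auto
  from THE_eq_if_inj_on[OF this x' x(3)] have "q1 c = x"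
    unfolding q1_def inv_sqrt2_def[symmetric] by simp
  then show ?thesis using x x' by simp
qed

lemma q2_props:
  assumes c: "0 < c" "c \<le> lambda_hat"
  shows "q_hat \<le> q2 c \<and> q2 c < q_star \<and> g_aux (q2 c) = c"
proof -
  have "continuous_on {q_hat..q_star} g_aux"
    using zero_less_q_hat q_star_props by (intro continuous_on_g_aux) auto
  moreover have "g_aux q_star \<le> c" "c \<le> g_aux q_hat" "q_hat \<le> q_star"
    using c q_hat_less_q_star g_aux_q_star by (simp_all add: lambda_hat_def)
  ultimately obtain x where x: "q_hat \<le> x" "x \<le> q_star" "g_aux x = c"
    using IVT2' by blast
  then have x': "x \<in> {q_hat..<q_star}" using c g_aux_q_star by (cases "x = q_star") auto
  have "inj_on g_aux {q_hat..<q_star}"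
    by (rule inj_on_subset[OF inj_on_if_strict_antimono_on[OF g_aux_strict_antimono_between]]) auto
  from THE_eq_if_inj_on[OF this x' x(3)] have "q2 c = x"
    unfolding q2_def by simp
  then show ?thesis using x x' by simp
qed

lemma q3_props:
  assumes c: "0 < c"
  shows "q_star < q3 c \<and> q3 c < 1 \<and> g_aux (q3 c) = c"
proof -
  obtain q0 where q0: "q_star < q0" "q0 < 1" "c \<le> g_aux q0" using g_aux_unbounded[OF c] .
  have "continuous_on {q_star..q0} g_aux"
    using inv_sqrt2_pos inv_sqrt2_less_q_star q0 by (intro continuous_on_g_aux) auto
  moreover have "g_aux q_star \<le> c" "q_star \<le> q0" using c q0 g_aux_q_star by simp_all
  ultimately obtain x where x: "q_star \<le> x" "x \<le> q0" "g_aux x = c"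
    using IVT' q0(3) by blast
  then have x': "x \<in> {q_star<..<1}" using c g_aux_q_star q0 by (cases "x = q_star") auto
  have "inj_on g_aux {q_star<..<1}"
    by (rule inj_on_subset[OF strict_mono_on_imp_inj_on[OF g_aux_strict_mono_above_q_star]]) auto
  from THE_eq_if_inj_on[OF this x' x(3)] have "q3 c = x"
    unfolding q3_def by simp
  then show ?thesis using x x' by simp
qed

theorem lemma2p9:
  fixes lam l :: real
  assumes "lam > 0" and "l > 0"
  shows "(lam * l\<^sup>2 \<le> lambda_hat \<longrightarrow>
            sym_curve (gamma_sarc lam l) (L_sarc lam l) l \<and>
            sym_curve (gamma_larc lam l) (L_larc lam l) l)
       \<and> sym_curve (gamma_loop lam l) (L_loop lam l) l
       \<and> (\<exists>s. 0 < s \<and> s < L_loop lam l / 2 \<and>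
              gamma_loop lam l s = gamma_loop lam l (L_loop lam l - s))"
proof -
  define c where "c = lam * l\<^sup>2"
  have c: "0 < c" using assms by (simp add: c_def)
  have regular: "q\<^sup>2 < 1" "2 * ellEc q - ellK q \<noteq> 0" if "0 < q" "q < 1" "g_aux q = c" for q
    using that c by (auto simp: square_less_1 g_aux_def)
  have q_star: "0 \<le> q_star" "q_star < 1" "q_hat < q_star" "inv_sqrt2 < q_hat"
    using q_star_props q_hat_less_q_star q_hat_props by auto
  have arcs: "sym_curve (gamma_sarc lam l) (L_sarc lam l) l \<and> sym_curve (gamma_larc lam l) (L_larc lam l) l"
    if "c \<le> lambda_hat"
    using q1_props[OF c that] q2_props[OF c that] q_star inv_sqrt2_pos assms(2)
      regular[of "q1 c"] regular[of "q2 c"]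
    by (auto simp: gamma_sarc_def L_sarc_def gamma_larc_def L_larc_def c_def Let_def
        intro!: sym_curve_gamma_arc)
  have q3: "q_star < q3 c" "q3 c < 1" "g_aux (q3 c) = c" using q3_props[OF c] by auto
  then have "sym_curve (gamma_loop lam l) (L_loop lam l) l"
    using q_star regular[of "q3 c"] assms(2)
    by (auto simp: gamma_loop_def L_loop_def c_def Let_def intro!: sym_curve_gamma_loop0)
  moreover have "2 * ellEc (q3 c) < ellK (q3 c)"
    using two_E_minus_K_neg[OF q3(1,2)] by (simp add: two_E_minus_K_def)
  then have "\<exists>s. 0 < s \<and> s < L_loop lam l / 2 \<and> gamma_loop lam l s = gamma_loop lam l (L_loop lam l - s)"
    using gamma_loop0_self_intersection[OF _ assms(2)] q3 q_star regular[of "q3 c"]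
    by (simp add: gamma_loop_def L_loop_def c_def Let_def)
  ultimately show ?thesis using arcs by (simp add: c_def)
qed

end
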